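(* Under the setting below, for any $k\in[K]$, any $h\in[H-1]$ and any policy $\pi$, $$\sum_{\tau_h}\big\|M^k_{o_h,a_h,h}\cdots M^k_{o_1,a_1,1}q^k_0-M_{o_h,a_h,h}\cdots M_{o_1,a_1,1}q_0\big\|_1\pi(\tau_h)\le\frac{|\mathcal{U}_A|}{\alpha}\Big(\sum_{l=1}^h\sum_{\tau_l}\big\|[M^k_{o_l,a_l,l}-M_{o_l,a_l,l}]b_{\tau_{l-1}}\big\|_1\pi(\tau_l)+\|q^k_0-q_0\|_1\Big),$$ where $M^k_{o,a,h}=M_{o,a,h;f^k}$, $q^k_0=q_{0;f^k}$ for the model $f^k$ selected by CRANE at iteration $k$, $M_{o,a,h},q_0$ are those of the true model $f^*$, and $b_{\tau_l}=M_{o_l,a_l,l}\cdots M_{o_1,a_1,1}q_0$ ($b_{\tau_0}=q_0$).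
   Context: Process: finite $\mathcal{O},\mathcal{A}$, horizon $H$; histories $\tau_h=(o_1,a_1,\dots,o_h,a_h)$; policies pick $a_h\sim\pi_h(\cdot\mid\tau_{h-1},o_h)$; $\pi(\tau_h)=\prod_{l\le h}\pi_l(a_l\mid\tau_{l-1},o_l)$; reward $r_h(o_h,a_h)$; $V^\pi_f$ and $\mathbb{P}^\pi_f$ denote value and trajectory probabilities in model $f$. A test starting at step $h$ is $t=(o_h,\dots,o_{h+W-1},a_h,\dots,a_{h+W-2})$; $\mathbb{P}_f(t\mid\tau_{h-1})$ is the probability of observing $o_{h:h+W-1}$ when executing $a_{h:h+W-2}$ after $\tau_{h-1}$ ($0$ if unreachable). A set $\mathcal{U}_h$ of tests starting at $h$ is a core test set for $f$ if for every test $t$ starting at $h$ there is a history-independent $m_{t,h;f}$ with $\mathbb{P}_f(t\mid\tau_{h-1})=\langle m_{t,h;f},q_{\tau_{h-1};f}\rangle$, $q_{\tau_{h-1};f}=[\mathbb{P}_f(u\mid\tau_{h-1})]_{u\in\mathcal{U}_h}$; $q_{0;f}=[\mathbb{P}_f(u)]_{u\in\mathcal{U}_1}$; $M_{o,a,h;f}$ has rows $m_{(o,a,u),h;f}^\top$, $u\in\mathcal{U}_{h+1}$. $\mathcal{U}_{A,h}$: action sequences in $\mathcal{U}_h$; $|\mathcal{U}_A|=\max_h|\mathcal{U}_{A,h}|$. $d_{\mathrm{PSR},h;f}$ is the rank of the matrix with entries $\mathbb{P}_f(t\mid\tau_h)$. Core matrix $K_{h;f}$ ($h\ge1$): columns $q_{\tau_h^1;f},\dots,q_{\tau_h^{d_{\mathrm{PSR},h;f}};f}$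 for histories whose predictive states span all $q_{\tau_h;f}$, chosen to minimize $\|K_{h;f}^\dagger\|_{1\to1}$; $K_{0;f}=q_{0;f}$. Standing assumptions: $\mathcal{F}$ is a model class with $f^*\in\mathcal{F}$; every $f\in\mathcal{F}$ is a valid PSR with core test sets $\{\mathcal{U}_h\}_{h\in[H]}$ and $\|K_{h;f}^\dagger\|_{1\to1}\le1/\alpha$ for $h\in\{0,\dots,H-1\}$; every $o\in\mathcal{O}$ belongs to $\mathcal{U}_H$. Convention: for every $f\in\mathcal{F}$ the vectors $m_{(o,a,u),h;f}$ are chosen in the column space of $K_{h-1;f}$ (such a choice exists and leaves $\mathbb{P}^\pi_f$ unchanged). Algorithm CRANE (input $\beta$): $\mathcal{B}^1=\mathcal{F}$, $\mathcal{D}=\emptyset$. For $k=1,\dots,K$: $(f^k,\pi^k)\in\arg\max_{f\in\mathcal{B}^k,\pi}V^\pi_f$; for each $h\in\{0,\dots,H-1\}$ and $u_a\in\mathcal{U}_{A,h+1}$, execute the policy following $\pi^k$ at steps $1,\dots,h-1$, a uniform action at step $h$ (if $h\ge1$), the actions of $u_a$ from step $h+1$, uniform afterwards, adding (policy, $\tau_H$) to $\mathcal{D}$; $\mathcal{B}^{k+1}=\{f\in\mathcal{F}:\sum_{\mathcal{D}}\log\mathbb{P}^\pi_f(\tau_H)\ge\max_{f'\in\mathcal{F}}\sum_{\mathcal{D}}\log\mathbb{P}^\pi_{f'}(\tau_H)-\beta\}$. *)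

theory Defs
  imports Complex_Main
begin

(* Histories tau_h = (o_1,a_1,...,o_h,a_h) are lists of (observation, action) pairs.
   A test starting at step h, t = (o_h,...,o_{h+W-1}, a_h,...,a_{h+W-2}), is encoded as the
   pair ([(o_h,a_h),...,(o_{h+W-2},a_{h+W-2})], o_{h+W-1}); its length is W = length (fst t) + 1.
   A model f is given by its conditional observation probabilities: f tau ob is the probability
   of observing ob at step length tau + 1 after history tau.
   A policy pi gives pi tau ob a = pi_h(a | tau_{h-1}, o_h) with h = length tau + 1.
   Vectors indexed by a finite set of tests U are functions test => real of which only the
   values on U matter. *)

type_synonym ('ob,'a) hist = "('ob \<times> 'a) list"
type_synonym ('ob,'a) test = "('ob \<times> 'a) list \<times> 'ob"
type_synonym ('ob,'a) model = "('ob \<times> 'a) list \<Rightarrow> 'ob \<Rightarrow> real"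
type_synonym ('ob,'a) policy = "('ob \<times> 'a) list \<Rightarrow> 'ob \<Rightarrow> 'a \<Rightarrow> real"

definition valid_model :: "nat \<Rightarrow> ('ob::finite,'a::finite) model \<Rightarrow> bool" where
  "valid_model H f \<longleftrightarrow> (\<forall>\<tau>. length \<tau> < H \<longrightarrow> (\<forall>ob. 0 \<le> f \<tau> ob) \<and> (\<Sum>ob\<in>UNIV. f \<tau> ob) = 1)"

definition valid_policy :: "nat \<Rightarrow> ('ob::finite,'a::finite) policy \<Rightarrow> bool" where
  "valid_policy H \<pi> \<longleftrightarrow>
     (\<forall>\<tau> ob. length \<tau> < H \<longrightarrow> (\<forall>a. 0 \<le> \<pi> \<tau> ob a) \<and> (\<Sum>a\<in>UNIV. \<pi> \<tau> ob a) = 1)"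

definition obs_prob :: "('ob,'a) model \<Rightarrow> ('ob,'a) hist \<Rightarrow> real" where
  "obs_prob f \<tau> = (\<Prod>i<length \<tau>. f (take i \<tau>) (fst (\<tau> ! i)))"

definition pol_prob :: "('ob,'a) policy \<Rightarrow> ('ob,'a) hist \<Rightarrow> real" where
  "pol_prob \<pi> \<tau> = (\<Prod>i<length \<tau>. \<pi> (take i \<tau>) (fst (\<tau> ! i)) (snd (\<tau> ! i)))"

definition hists :: "nat \<Rightarrow> ('ob,'a) hist set" where
  "hists h = {\<tau>. length \<tau> = h}"

text \<open>Tests starting at step h (within the horizon H).\<close>
definition tests_at :: "nat \<Rightarrow> nat \<Rightarrow> ('ob,'a) test set" where
  "tests_at H h = {t. h + length (fst t) \<le> H}"

text \<open>P_f(t | tau_{h-1}), with value 0 if tau_{h-1} is unreachable.\<close>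
definition test_prob :: "('ob,'a) model \<Rightarrow> ('ob,'a) hist \<Rightarrow> ('ob,'a) test \<Rightarrow> real" where
  "test_prob f \<tau> t =
     (if obs_prob f \<tau> > 0
      then (\<Prod>i<length (fst t). f (\<tau> @ take i (fst t)) (fst (fst t ! i))) * f (\<tau> @ fst t) (snd t)
      else 0)"

definition inner_on :: "'t set \<Rightarrow> ('t \<Rightarrow> real) \<Rightarrow> ('t \<Rightarrow> real) \<Rightarrow> real" where
  "inner_on U m x = (\<Sum>u\<in>U. m u * x u)"

definition norm1_on :: "'t set \<Rightarrow> ('t \<Rightarrow> real) \<Rightarrow> real" where
  "norm1_on U x = (\<Sum>u\<in>U. \<bar>x u\<bar>)"

text \<open>U is a core test set (starting at h) for f; predictive state q_{tau;f} = test_prob f tau on U.\<close>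
definition is_core_test_set :: "nat \<Rightarrow> ('ob,'a) model \<Rightarrow> ('ob,'a) test set \<Rightarrow> nat \<Rightarrow> bool" where
  "is_core_test_set H f U h \<longleftrightarrow> U \<subseteq> tests_at H h \<and>
     (\<forall>t\<in>tests_at H h. \<exists>m. \<forall>\<tau>\<in>hists (h - 1). test_prob f \<tau> t = inner_on U m (test_prob f \<tau>))"

text \<open>The test (ob,a,u) starting at h, for u a test starting at h+1.\<close>
definition ext_test :: "'ob \<Rightarrow> 'a \<Rightarrow> ('ob,'a) test \<Rightarrow> ('ob,'a) test" where
  "ext_test ob a u = ((ob,a) # fst u, snd u)"

definition test_actions :: "('ob,'a) test \<Rightarrow> 'a list" where
  "test_actions t = map snd (fst t)"

definition UA_card :: "nat \<Rightarrow> (nat \<Rightarrow> ('ob,'a) test set) \<Rightarrow> nat" where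
  "UA_card H U = Max ((\<lambda>h. card (test_actions ` U h)) ` {1..H})"

text \<open>Column rank d_PSR,h;f of the matrix [P_f(t | tau_h)]_{t, tau_h}.\<close>
definition lin_indep_hists :: "('ob,'a) model \<Rightarrow> ('ob,'a) test set \<Rightarrow> ('ob,'a) hist list \<Rightarrow> bool" where
  "lin_indep_hists f T hs \<longleftrightarrow>
     (\<forall>c. (\<forall>t\<in>T. (\<Sum>j<length hs. c j * test_prob f (hs ! j) t) = 0) \<longrightarrow> (\<forall>j<length hs. c j = 0))"

definition d_PSR :: "nat \<Rightarrow> ('ob,'a) model \<Rightarrow> nat \<Rightarrow> nat" where
  "d_PSR H f h = Max {n. \<exists>hs. set hs \<subseteq> hists h \<and> length hs = n \<and> lin_indep_hists f (tests_at H (Suc h)) hs}"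

text \<open>Moore-Penrose pseudo-inverse of a real I x J matrix K (X is J x I, zero off its index sets).\<close>
definition penrose :: "'r set \<Rightarrow> 'c set \<Rightarrow> ('r \<Rightarrow> 'c \<Rightarrow> real) \<Rightarrow> ('c \<Rightarrow> 'r \<Rightarrow> real) \<Rightarrow> bool" where
  "penrose I J K X \<longleftrightarrow>
     (\<forall>i\<in>I. \<forall>j\<in>J. (\<Sum>i'\<in>I. (\<Sum>j'\<in>J. K i j' * X j' i') * K i' j) = K i j) \<and>
     (\<forall>j\<in>J. \<forall>i\<in>I. (\<Sum>j'\<in>J. (\<Sum>i'\<in>I. X j i' * K i' j') * X j' i) = X j i) \<and>
     (\<forall>i\<in>I. \<forall>i'\<in>I. (\<Sum>j\<in>J. K i j * X j i') = (\<Sum>j\<in>J. K i' j * X j i)) \<and>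
     (\<forall>j\<in>J. \<forall>j'\<in>J. (\<Sum>i\<in>I. X j i * K i j') = (\<Sum>i\<in>I. X j' i * K i j))"

definition pinv :: "'r set \<Rightarrow> 'c set \<Rightarrow> ('r \<Rightarrow> 'c \<Rightarrow> real) \<Rightarrow> ('c \<Rightarrow> 'r \<Rightarrow> real)" where
  "pinv I J K = (THE X. (\<forall>j i. j \<notin> J \<or> i \<notin> I \<longrightarrow> X j i = 0) \<and> penrose I J K X)"

definition opnorm11 :: "'r set \<Rightarrow> 'c set \<Rightarrow> ('c \<Rightarrow> 'r \<Rightarrow> real) \<Rightarrow> real" where
  "opnorm11 I J X = Sup {(\<Sum>j\<in>J. \<bar>\<Sum>i\<in>I. X j i * x i\<bar>) | x. (\<Sum>i\<in>I. \<bar>x i\<bar>) \<le> 1}"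

definition Kmat :: "('ob,'a) model \<Rightarrow> ('ob,'a) hist list \<Rightarrow> ('ob,'a) test \<Rightarrow> nat \<Rightarrow> real" where
  "Kmat f hs = (\<lambda>u j. test_prob f (hs ! j) u)"

definition Kdag_norm :: "(nat \<Rightarrow> ('ob,'a) test set) \<Rightarrow> ('ob,'a) model \<Rightarrow> nat \<Rightarrow> ('ob,'a) hist list \<Rightarrow> real" where
  "Kdag_norm U f h hs = opnorm11 (U (Suc h)) {..<length hs} (pinv (U (Suc h)) {..<length hs} (Kmat f hs))"

definition core_choices :: "nat \<Rightarrow> (nat \<Rightarrow> ('ob,'a) test set) \<Rightarrow> ('ob,'a) model \<Rightarrow> nat \<Rightarrow> ('ob,'a) hist list set" where
  "core_choices H U f h = {hs. set hs \<subseteq> hists h \<and> length hs = d_PSR H f h \<and>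
      (\<forall>\<tau>\<in>hists h. \<exists>c. \<forall>u\<in>U (Suc h). test_prob f \<tau> u = (\<Sum>j<length hs. c j * test_prob f (hs ! j) u))}"

text \<open>Columns of K_{h;f}: the choice minimising ||K^dagger||_{1->1}; K_{0;f} = q_{0;f} (column of the empty history).\<close>
definition K_cols :: "nat \<Rightarrow> (nat \<Rightarrow> ('ob,'a) test set) \<Rightarrow> ('ob,'a) model \<Rightarrow> nat \<Rightarrow> ('ob,'a) hist list" where
  "K_cols H U f h = (if h = 0 then [[]] else arg_min (Kdag_norm U f h) (\<lambda>hs. hs \<in> core_choices H U f h))"

definition in_colspace_K :: "nat \<Rightarrow> (nat \<Rightarrow> ('ob,'a) test set) \<Rightarrow> ('ob,'a) model \<Rightarrow> nat \<Rightarrow> (('ob,'a) test \<Rightarrow> real) \<Rightarrow> bool" where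
  "in_colspace_K H U f h x \<longleftrightarrow> (let hs = K_cols H U f h in
     \<exists>c. \<forall>u\<in>U (Suc h). x u = (\<Sum>j<length hs. c j * test_prob f (hs ! j) u))"

text \<open>Given chosen vectors m f h t = m_{t,h;f}: the map x |-> M_{ob,a,h;f} x (rows indexed by U_{h+1}).\<close>
definition M_app :: "(nat \<Rightarrow> ('ob,'a) test set) \<Rightarrow> (('ob,'a) model \<Rightarrow> nat \<Rightarrow> ('ob,'a) test \<Rightarrow> ('ob,'a) test \<Rightarrow> real)
     \<Rightarrow> ('ob,'a) model \<Rightarrow> nat \<Rightarrow> 'ob \<Rightarrow> 'a \<Rightarrow> (('ob,'a) test \<Rightarrow> real) \<Rightarrow> ('ob,'a) test \<Rightarrow> real" where
  "M_app U m f h ob a x = (\<lambda>u. inner_on (U h) (m f h (ext_test ob a u)) x)"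

text \<open>M_seq U m f l [(o_l,a_l),...,(o_h,a_h)] x = M_{o_h,a_h,h} ... M_{o_l,a_l,l} x.\<close>
fun M_seq :: "(nat \<Rightarrow> ('ob,'a) test set) \<Rightarrow> (('ob,'a) model \<Rightarrow> nat \<Rightarrow> ('ob,'a) test \<Rightarrow> ('ob,'a) test \<Rightarrow> real)
     \<Rightarrow> ('ob,'a) model \<Rightarrow> nat \<Rightarrow> ('ob,'a) hist \<Rightarrow> (('ob,'a) test \<Rightarrow> real) \<Rightarrow> ('ob,'a) test \<Rightarrow> real" where
  "M_seq U m f l [] x = x"
| "M_seq U m f l ((ob,a) # \<tau>) x = M_seq U m f (Suc l) \<tau> (M_app U m f l ob a x)"

definition q0 :: "('ob,'a) model \<Rightarrow> ('ob,'a) test \<Rightarrow> real" where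
  "q0 f = test_prob f []"

end

theory Submission
  imports Defs "HOL-Library.Function_Algebras"
begin

text \<open>Telescoping writes the difference of the two operator products as the initial error
  propagated by the operators of \<open>f\<^sup>k\<close>, plus, for every step \<open>l\<close>, the local error
  \<open>(M\<^sup>k\<^sub>l - M\<^sub>l) b\<close> (at the true prediction \<open>b\<close> of the prefix) propagated by the
  remaining operators of \<open>f\<^sup>k\<close>. Since the rows of the operators of \<open>f\<^sup>k\<close> lie in the column
  space of its core matrix \<open>K\<^sub>l\<close>, a vector \<open>y\<close> may be replaced by \<open>K\<^sub>l K\<^sub>l\<^sup>\<dagger> y\<close>
  before being propagated. The columns of \<open>K\<^sub>l\<close> are predictive states, which the operators
  map to scaled predictive states, and under any policy the expected 1-norm of a predictive state
  is at most \<open>|U\<^sub>A|\<close>: one unit of probability mass per action sequence. As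
  \<open>\<parallel>K\<^sub>l\<^sup>\<dagger>\<parallel>\<^sub>1\<^sub>\<rightarrow>\<^sub>1 \<le> 1/\<alpha>\<close>, every term is inflated by at most \<open>|U\<^sub>A|/\<alpha>\<close>.\<close>

section \<open>Vectors and matrices indexed by finite sets\<close>

lemma norm1_on_nonneg: "norm1_on A x \<ge> 0"
  unfolding norm1_on_def by (simp add: sum_nonneg)

lemma norm1_on_cong: "\<forall>u\<in>A. x u = x' u \<Longrightarrow> norm1_on A x = norm1_on A x'"
  unfolding norm1_on_def by simp

lemma norm1_on_cmult: "norm1_on A (\<lambda>u. c * x u) = \<bar>c\<bar> * norm1_on A x"
  unfolding norm1_on_def by (simp add: abs_mult sum_distrib_left)

lemma norm1_on_add: "norm1_on A (\<lambda>u. x u + y u) \<le> norm1_on A x + norm1_on A y"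
  unfolding norm1_on_def by (simp add: sum.distrib[symmetric] sum_mono abs_triangle_ineq)

lemma norm1_on_sum: "norm1_on A (\<lambda>u. \<Sum>i\<in>I. x i u) \<le> (\<Sum>i\<in>I. norm1_on A (x i))"
proof -
  have "norm1_on A (\<lambda>u. \<Sum>i\<in>I. x i u) \<le> (\<Sum>u\<in>A. \<Sum>i\<in>I. \<bar>x i u\<bar>)"
    unfolding norm1_on_def by (intro sum_mono sum_abs)
  also have "\<dots> = (\<Sum>i\<in>I. norm1_on A (x i))"
    unfolding norm1_on_def by (rule sum.swap)
  finally show ?thesis .
qed

lemma norm1_on_add_sum:
  "norm1_on A (\<lambda>u. x u + (\<Sum>i\<in>I. y i u)) \<le> norm1_on A x + (\<Sum>i\<in>I. norm1_on A (y i))"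
  using norm1_on_add[of A x] norm1_on_sum[of A y I] by (meson add_left_mono order_trans)

lemma opnorm11_bound:
  assumes fI: "finite I"
  shows "(\<Sum>j\<in>J. \<bar>\<Sum>i\<in>I. X j i * y i\<bar>) \<le> opnorm11 I J X * (\<Sum>i\<in>I. \<bar>y i\<bar>)"
proof -
  let ?S = "{(\<Sum>j\<in>J. \<bar>\<Sum>i\<in>I. X j i * x i\<bar>) | x. (\<Sum>i\<in>I. \<bar>x i\<bar>) \<le> 1}"
  have bdd: "bdd_above ?S"
  proof (rule bdd_aboveI)
    fix s assume "s \<in> ?S"
    then obtain x where s: "s = (\<Sum>j\<in>J. \<bar>\<Sum>i\<in>I. X j i * x i\<bar>)" and x: "(\<Sum>i\<in>I. \<bar>x i\<bar>) \<le> 1"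
      by auto
    have "\<bar>x i\<bar> \<le> 1" if "i \<in> I" for i
      using member_le_sum[of i I "\<lambda>i. \<bar>x i\<bar>"] that fI x by auto
    then have "\<bar>\<Sum>i\<in>I. X j i * x i\<bar> \<le> (\<Sum>i\<in>I. \<bar>X j i\<bar>)" for j
      by (intro order.trans[OF sum_abs] sum_mono) (auto simp: abs_mult intro: mult_left_le)
    then show "s \<le> (\<Sum>j\<in>J. \<Sum>i\<in>I. \<bar>X j i\<bar>)"
      unfolding s by (intro sum_mono)
  qed
  let ?n = "\<Sum>i\<in>I. \<bar>y i\<bar>"
  show ?thesis
  proof (cases "?n = 0")
    case True
    then have "\<forall>i\<in>I. y i = 0" using fI by (simp add: sum_nonneg_eq_0_iff)
    then show ?thesis using True by simp
  next
    case False
    then have npos: "?n > 0" by (simp add: sum_nonneg order_le_neq_trans)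
    let ?x = "\<lambda>i. y i / ?n"
    have "(\<Sum>i\<in>I. \<bar>?x i\<bar>) = 1" using npos by (simp add: sum_divide_distrib[symmetric])
    then have "(\<Sum>j\<in>J. \<bar>\<Sum>i\<in>I. X j i * ?x i\<bar>) \<in> ?S"
      by (intro CollectI exI[of _ ?x]) simp
    then have "(\<Sum>j\<in>J. \<bar>\<Sum>i\<in>I. X j i * ?x i\<bar>) \<le> opnorm11 I J X"
      unfolding opnorm11_def using bdd by (rule cSup_upper)
    moreover have "(\<Sum>j\<in>J. \<bar>\<Sum>i\<in>I. X j i * ?x i\<bar>) = (\<Sum>j\<in>J. \<bar>\<Sum>i\<in>I. X j i * y i\<bar>) / ?n"
      using npos by (simp add: sum_divide_distrib[symmetric])
    ultimately show ?thesis using npos by (simp add: divide_le_eq mult.commute)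
  qed
qed

lemma sum_fun_apply: "(\<Sum>v\<in>A. g v) x = (\<Sum>v\<in>A. g v x)"
  by (induction A rule: infinite_finite_induct) auto

lemma indep_family_inj_on:
  fixes w :: "nat \<Rightarrow> 'x \<Rightarrow> real"
  assumes indep: "\<And>c. (\<And>x. (\<Sum>j<n. c j * w j x) = 0) \<Longrightarrow> \<forall>j<n. c j = 0"
  shows "inj_on w {..<n}"
proof (rule inj_onI, rule ccontr)
  fix j k assume j: "j \<in> {..<n}" and k: "k \<in> {..<n}" and eq: "w j = w k" and "j \<noteq> k"
  let ?c = "\<lambda>i. (if i = j then 1 else 0) - (if i = k then 1 else 0) :: real"
  have "(\<Sum>i<n. ?c i * w i x) = (\<Sum>i<n. (if i = j then w j x else 0) - (if i = k then w k x else 0))"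
    for x by (rule sum.cong) auto
  then have "(\<Sum>i<n. ?c i * w i x) = 0" for x
    using j k eq by (simp add: sum_subtractf)
  then have "\<forall>i<n. ?c i = 0" by (rule indep)
  then show False using j \<open>j \<noteq> k\<close> by auto
qed

lemma indep_in_span_length_le_card:
  fixes w :: "nat \<Rightarrow> 'x \<Rightarrow> real" and e :: "'k \<Rightarrow> 'x \<Rightarrow> real"
  assumes fK: "finite Ks"
    and indep: "\<And>c. (\<And>x. (\<Sum>j<n. c j * w j x) = 0) \<Longrightarrow> \<forall>j<n. c j = 0"
    and span: "\<And>j. j < n \<Longrightarrow> \<exists>b. w j = (\<lambda>x. \<Sum>k\<in>Ks. b k * e k x)"
  shows "n \<le> card Ks"
proof -
  interpret fun_space: vector_space "\<lambda>(c::real) (g::'x \<Rightarrow> real) x. c * g x"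
    by unfold_locales (auto simp: algebra_simps)
  have inj: "inj_on w {..<n}" using indep by (rule indep_family_inj_on)
  have "fun_space.independent (w ` {..<n})"
    unfolding fun_space.independent_explicit_module
  proof (intro allI impI)
    fix t u v assume "finite t" and tW: "t \<subseteq> w ` {..<n}"
      and t0: "(\<Sum>v\<in>t. (\<lambda>x. u v * v x)) = 0" and vt: "v \<in> t"
    let ?S = "{i. i < n \<and> w i \<in> t}"
    let ?c = "\<lambda>i. if i < n \<and> w i \<in> t then u (w i) else 0"
    have wS: "w ` ?S = t" using tW by auto
    have injS: "inj_on w ?S" using inj by (rule inj_on_subset) auto
    have "(\<Sum>j<n. ?c j * w j x) = 0" for x
    proof -
      have "(\<Sum>j<n. ?c j * w j x) = (\<Sum>j\<in>?S. u (w j) * w j x)"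
        by (rule sum.mono_neutral_cong_right) auto
      also have "\<dots> = (\<Sum>v\<in>t. u v * v x)"
        using sum.reindex[OF injS, of "\<lambda>v. u v * v x"] wS by simp
      also have "\<dots> = (\<Sum>v\<in>t. (\<lambda>x. u v * v x)) x" by (simp add: sum_fun_apply)
      also have "\<dots> = 0" using t0 by simp
      finally show ?thesis .
    qed
    then have "\<forall>j<n. ?c j = 0" by (rule indep)
    moreover obtain i where "i < n" "v = w i" using vt tW by auto
    ultimately show "u v = 0" using vt by auto
  qed
  moreover have "w ` {..<n} \<subseteq> fun_space.span (e ` Ks)"
  proof
    fix v assume "v \<in> w ` {..<n}"
    then obtain j where "j < n" "v = w j" by auto
    then obtain b where "v = (\<lambda>x. \<Sum>k\<in>Ks. b k * e k x)" using span by blast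
    then have "v = (\<Sum>k\<in>Ks. (\<lambda>x. b k * e k x))" by (auto simp: sum_fun_apply)
    also have "\<dots> \<in> fun_space.span (e ` Ks)"
      by (intro fun_space.span_sum fun_space.span_scale fun_space.span_base) auto
    finally show "v \<in> fun_space.span (e ` Ks)" .
  qed
  ultimately have "card (w ` {..<n}) \<le> card (e ` Ks)"
    using fun_space.independent_span_bound fK by blast
  also have "\<dots> \<le> card Ks" using fK by (rule card_image_le)
  finally show ?thesis using card_image[OF inj] by simp
qed

lemma lin_comb_remove_dependent:
  fixes w :: "nat \<Rightarrow> real"
  assumes j0: "j0 < d" "c j0 \<noteq> 0" and dep: "(\<Sum>j<d. c j * w j) = 0"
  shows "(\<Sum>j<d. a j * w j) = (\<Sum>j\<in>{..<d} - {j0}. (a j - a j0 * c j / c j0) * w j)"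
proof -
  have split: "(\<Sum>j<d. g j) = g j0 + (\<Sum>j\<in>{..<d} - {j0}. g j)" for g :: "nat \<Rightarrow> real"
    using j0(1) by (simp add: sum.remove)
  have "(\<Sum>j\<in>{..<d} - {j0}. c j * w j) = - (c j0 * w j0)"
    using dep split[of "\<lambda>j. c j * w j"] by simp
  then have "(\<Sum>j\<in>{..<d} - {j0}. (a j - a j0 * c j / c j0) * w j)
      = (\<Sum>j\<in>{..<d} - {j0}. a j * w j) + a j0 * w j0"
    using j0(2) by (simp add: left_diff_distrib sum_subtractf sum_divide_distrib[symmetric]
        sum_distrib_left[symmetric] mult.assoc)
  then show ?thesis using split[of "\<lambda>j. a j * w j"] by simp
qed

lemma gram_injective:
  fixes K :: "'r \<Rightarrow> nat \<Rightarrow> real"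
  assumes fI: "finite I"
    and indep: "\<And>c. \<forall>i\<in>I. (\<Sum>j<d. c j * K i j) = 0 \<Longrightarrow> \<forall>j<d. c j = 0"
    and z: "\<forall>j<d. (\<Sum>j'<d. (\<Sum>i\<in>I. K i j * K i j') * z j') = 0"
  shows "\<forall>j<d. z j = 0"
proof -
  have "(\<Sum>j<d. z j * (\<Sum>j'<d. (\<Sum>i\<in>I. K i j * K i j') * z j'))
      = (\<Sum>j<d. \<Sum>j'<d. \<Sum>i\<in>I. K i j * z j * (K i j' * z j'))"
    by (simp add: sum_distrib_left sum_distrib_right mult_ac)
  also have "\<dots> = (\<Sum>i\<in>I. \<Sum>j<d. \<Sum>j'<d. K i j * z j * (K i j' * z j'))"
    by (simp only: sum.swap[where A = "{..<d}" and B = I])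
  also have "\<dots> = (\<Sum>i\<in>I. (\<Sum>j<d. z j * K i j)\<^sup>2)"
    by (simp add: power2_eq_square sum_distrib_left sum_distrib_right mult_ac)
  finally have "(\<Sum>i\<in>I. (\<Sum>j<d. z j * K i j)\<^sup>2) = 0" using z by simp
  then have "\<forall>i\<in>I. (\<Sum>j<d. z j * K i j) = 0"
    using fI by (subst (asm) sum_nonneg_eq_0_iff) auto
  then show ?thesis using indep by (simp add: mult.commute)
qed

lemma injective_square_matrix_surjective:
  fixes G :: "nat \<Rightarrow> nat \<Rightarrow> real"
  assumes inj: "\<And>z. \<forall>j<d. (\<Sum>j'<d. G j j' * z j') = 0 \<Longrightarrow> \<forall>j<d. z j = 0"
  shows "\<exists>z. \<forall>j<d. (\<Sum>j'<d. G j j' * z j') = b j"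
proof (rule ccontr)
  assume no_solution: "\<not> ?thesis"
  \<comment> \<open>the \<open>d\<close> columns of \<open>G\<close> together with \<open>b\<close> are \<open>d + 1\<close> independent vectors of \<open>\<real>\<^sup>d\<close>\<close>
  define w where "w j = (\<lambda>k. if k < d then (if j < d then G k j else b k) else 0)" for j
  define e where "e k = (\<lambda>x::nat. if x = k then 1 else (0::real))" for k
  have "Suc d \<le> card {..<d}"
  proof (rule indep_in_span_length_le_card[where w = w and e = e])
    fix j assume "j < Suc d"
    have "(\<Sum>k<d. w j k * e k x) = w j x" for x
    proof -
      have "(\<Sum>k<d. w j k * e k x) = (\<Sum>k<d. if k = x then w j k else 0)"
        by (rule sum.cong) (auto simp: e_def)
      then show ?thesis by (simp add: w_def)
    qed
    then show "\<exists>c. w j = (\<lambda>x. \<Sum>k<d. c k * e k x)"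
      by (intro exI[of _ "w j"]) (simp add: fun_eq_iff)
  next
    fix c assume dep: "\<And>x. (\<Sum>j<Suc d. c j * w j x) = 0"
    have dep_k: "(\<Sum>j<d. c j * G k j) + c d * b k = 0" if "k < d" for k
      using dep[of k] that by (simp add: w_def)
    have "c d = 0"
    proof (rule ccontr)
      assume "c d \<noteq> 0"
      have "(\<Sum>j<d. G k j * (- c j / c d)) = b k" if "k < d" for k
      proof -
        have "(\<Sum>j<d. G k j * (- c j / c d)) = (\<Sum>j<d. c j * G k j) * (- 1 / c d)"
          by (subst sum_distrib_right) (rule sum.cong, simp_all)
        also have "(\<Sum>j<d. c j * G k j) = - (c d * b k)"
          using dep_k[OF that] by (simp add: eq_neg_iff_add_eq_0)
        also have "- (c d * b k) * (- 1 / c d) = b k" using \<open>c d \<noteq> 0\<close> by simp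
        finally show ?thesis .
      qed
      then have "\<exists>z. \<forall>k<d. (\<Sum>j<d. G k j * z j) = b k"
        by (intro exI[of _ "\<lambda>j. - c j / c d"]) simp
      with no_solution show False by simp
    qed
    moreover have "\<forall>k<d. (\<Sum>j<d. G k j * c j) = 0"
      using dep_k \<open>c d = 0\<close> by (simp add: mult.commute)
    then have "\<forall>j<d. c j = 0" by (rule inj)
    ultimately show "\<forall>j<Suc d. c j = 0" using less_Suc_eq by auto
  qed simp
  then show False by simp
qed

lemma penrose_gram:
  assumes P: "penrose I J K Y" and j: "j \<in> J" and i0: "i0 \<in> I"
  shows "(\<Sum>j'\<in>J. (\<Sum>i\<in>I. K i j * K i j') * Y j' i0) = K i0 j"
proof -
  have KYK: "(\<Sum>i'\<in>I. (\<Sum>j'\<in>J. K i0 j' * Y j' i') * K i' j) = K i0 j"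
    using P j i0 unfolding penrose_def by blast
  have KY_sym: "(\<Sum>j'\<in>J. K i0 j' * Y j' i') = (\<Sum>j'\<in>J. K i' j' * Y j' i0)" if "i' \<in> I" for i'
    using P i0 that unfolding penrose_def by blast
  have "K i0 j = (\<Sum>i'\<in>I. (\<Sum>j'\<in>J. K i' j' * Y j' i0) * K i' j)"
    using KYK[symmetric] by (simp only:) (rule sum.cong[OF refl], simp add: KY_sym)
  also have "\<dots> = (\<Sum>i'\<in>I. \<Sum>j'\<in>J. K i' j * K i' j' * Y j' i0)"
    by (simp add: sum_distrib_left sum_distrib_right mult_ac)
  also have "\<dots> = (\<Sum>j'\<in>J. \<Sum>i'\<in>I. K i' j * K i' j' * Y j' i0)" by (rule sum.swap)
  also have "\<dots> = (\<Sum>j'\<in>J. (\<Sum>i\<in>I. K i j * K i j') * Y j' i0)"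
    by (simp add: sum_distrib_right)
  finally show ?thesis by simp
qed

lemma penrose_transpose_proj:
  assumes P: "penrose I J K Y" and j: "j \<in> J"
  shows "(\<Sum>i\<in>I. K i j * y i) = (\<Sum>i\<in>I. K i j * (\<Sum>j'\<in>J. (\<Sum>i'\<in>I. Y j' i' * y i') * K i j'))"
proof -
  have "(\<Sum>i\<in>I. K i j * (\<Sum>j'\<in>J. (\<Sum>i'\<in>I. Y j' i' * y i') * K i j'))
      = (\<Sum>i\<in>I. \<Sum>j'\<in>J. \<Sum>i'\<in>I. K i j * K i j' * Y j' i' * y i')"
    by (simp add: sum_distrib_left sum_distrib_right mult_ac)
  also have "\<dots> = (\<Sum>j'\<in>J. \<Sum>i\<in>I. \<Sum>i'\<in>I. K i j * K i j' * Y j' i' * y i')" by (rule sum.swap)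
  also have "\<dots> = (\<Sum>j'\<in>J. \<Sum>i'\<in>I. \<Sum>i\<in>I. K i j * K i j' * Y j' i' * y i')"
    by (rule sum.cong[OF refl], rule sum.swap)
  also have "\<dots> = (\<Sum>i'\<in>I. \<Sum>j'\<in>J. \<Sum>i\<in>I. K i j * K i j' * Y j' i' * y i')" by (rule sum.swap)
  also have "\<dots> = (\<Sum>i'\<in>I. (\<Sum>j'\<in>J. (\<Sum>i\<in>I. K i j * K i j') * Y j' i') * y i')"
    by (simp add: sum_distrib_right)
  also have "\<dots> = (\<Sum>i'\<in>I. K i' j * y i')"
    using penrose_gram[OF P j] by simp
  finally show ?thesis by simp
qed

context
  fixes I :: "'r set" and d :: nat and K :: "'r \<Rightarrow> nat \<Rightarrow> real"
  assumes fI: "finite I"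
    and indep: "\<And>c. \<forall>i\<in>I. (\<Sum>j<d. c j * K i j) = 0 \<Longrightarrow> \<forall>j<d. c j = 0"
begin

private definition gram :: "nat \<Rightarrow> nat \<Rightarrow> real" where
  "gram j j' = (\<Sum>i\<in>I. K i j * K i j')"

private lemma gram_inj: "\<forall>j<d. (\<Sum>j'<d. gram j j' * z j') = 0 \<Longrightarrow> \<forall>j<d. z j = 0"
  unfolding gram_def by (rule gram_injective[OF fI indep])

private lemma gram_solution_left_inverse:
  assumes GX: "\<And>j i. j < d \<Longrightarrow> i \<in> I \<Longrightarrow> (\<Sum>j'<d. gram j j' * X j' i) = K i j"
    and j: "j < d" and j0: "j0 < d"
  shows "(\<Sum>i\<in>I. X j i * K i j0) = (if j = j0 then 1 else 0)"
proof -
  define v where "v j = (\<Sum>i\<in>I. X j i * K i j0) - (if j = j0 then 1 else 0)" for j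
  have "\<forall>j<d. (\<Sum>j'<d. gram j j' * v j') = 0"
  proof (intro allI impI)
    fix j assume j: "j < d"
    have "(\<Sum>j'<d. gram j j' * v j') = (\<Sum>j'<d. gram j j' * (\<Sum>i\<in>I. X j' i * K i j0))
        - (\<Sum>j'<d. gram j j' * (if j' = j0 then 1 else 0))"
      unfolding v_def by (simp only: right_diff_distrib sum_subtractf)
    also have "(\<Sum>j'<d. gram j j' * (if j' = j0 then 1 else 0)) = gram j j0"
      using j0 by (simp add: if_distrib cong: if_cong)
    also have "(\<Sum>j'<d. gram j j' * (\<Sum>i\<in>I. X j' i * K i j0))
        = (\<Sum>j'<d. \<Sum>i\<in>I. gram j j' * X j' i * K i j0)"
      by (simp add: sum_distrib_left mult_ac)
    also have "\<dots> = (\<Sum>i\<in>I. \<Sum>j'<d. gram j j' * X j' i * K i j0)"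
      by (rule sum.swap)
    also have "\<dots> = (\<Sum>i\<in>I. K i j * K i j0)"
      by (rule sum.cong[OF refl]) (simp add: GX[OF j, symmetric] sum_distrib_right)
    finally show "(\<Sum>j'<d. gram j j' * v j') = 0" by (simp add: gram_def)
  qed
  then have "\<forall>j<d. v j = 0" by (rule gram_inj)
  then show ?thesis using j by (simp add: v_def)
qed

private lemma gram_solution_penrose:
  assumes GX: "\<And>j i. j < d \<Longrightarrow> i \<in> I \<Longrightarrow> (\<Sum>j'<d. gram j j' * X j' i) = K i j"
  shows "penrose I {..<d} K X"
proof -
  note XK = gram_solution_left_inverse[OF GX]
  show ?thesis
    unfolding penrose_def
  proof (intro conjI ballI)
    fix i j assume "i \<in> I" and j: "j \<in> {..<d}"
    have "(\<Sum>i'\<in>I. (\<Sum>j'<d. K i j' * X j' i') * K i' j) = (\<Sum>j'<d. K i j' * (\<Sum>i'\<in>I. X j' i' * K i' j))"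
      by (simp add: sum_distrib_left sum_distrib_right mult_ac sum.swap[where A = I])
    also have "\<dots> = K i j"
      using j by (simp add: XK if_distrib cong: if_cong)
    finally show "(\<Sum>i'\<in>I. (\<Sum>j'\<in>{..<d}. K i j' * X j' i') * K i' j) = K i j" by simp
  next
    fix j i assume j: "j \<in> {..<d}" and "i \<in> I"
    have "(\<Sum>j'<d. (\<Sum>i'\<in>I. X j i' * K i' j') * X j' i) = (\<Sum>j'<d. if j' = j then X j' i else 0)"
      using j by (intro sum.cong) (simp_all add: XK)
    then show "(\<Sum>j'\<in>{..<d}. (\<Sum>i'\<in>I. X j i' * K i' j') * X j' i) = X j i"
      using j by simp
  next
    fix i i' assume i: "i \<in> I" and i': "i' \<in> I"
    have KX: "(\<Sum>j<d. K a j * X j b) = (\<Sum>j<d. \<Sum>j'<d. gram j j' * X j' a * X j b)" if "a \<in> I" for a b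
      by (rule sum.cong[OF refl]) (simp add: GX[OF _ that, symmetric] sum_distrib_right)
    have "(\<Sum>j<d. \<Sum>j'<d. gram j j' * X j' i * X j i') = (\<Sum>j'<d. \<Sum>j<d. gram j j' * X j' i * X j i')"
      by (rule sum.swap)
    also have "\<dots> = (\<Sum>j<d. \<Sum>j'<d. gram j j' * X j' i' * X j i)"
      by (intro sum.cong refl) (simp add: gram_def mult_ac)
    finally show "(\<Sum>j\<in>{..<d}. K i j * X j i') = (\<Sum>j\<in>{..<d}. K i' j * X j i)"
      using KX[OF i, of i'] KX[OF i', of i] by simp
  next
    fix j j' assume "j \<in> {..<d}" "j' \<in> {..<d}"
    then show "(\<Sum>i\<in>I. X j i * K i j') = (\<Sum>i\<in>I. X j' i * K i j)" by (simp add: XK)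
  qed
qed

private lemma penrose_unique:
  assumes X: "penrose I {..<d} K X" "\<forall>j i. j \<notin> {..<d} \<or> i \<notin> I \<longrightarrow> X j i = 0"
    and Y: "penrose I {..<d} K Y" "\<forall>j i. j \<notin> {..<d} \<or> i \<notin> I \<longrightarrow> Y j i = 0"
  shows "Y = X"
proof (intro ext)
  fix j i
  show "Y j i = X j i"
  proof (cases "j < d \<and> i \<in> I")
    case True
    have "\<forall>j<d. (\<Sum>j'<d. gram j j' * (Y j' i - X j' i)) = 0"
      using penrose_gram[OF X(1)] penrose_gram[OF Y(1)] True
      by (simp add: gram_def right_diff_distrib sum_subtractf)
    then have "\<forall>j<d. Y j i - X j i = 0" by (rule gram_inj)
    then show ?thesis using True by simp
  next
    case False
    then show ?thesis using X(2) Y(2) by auto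
  qed
qed

lemma pinv_full_column_rank:
  shows penrose_pinv: "penrose I {..<d} K (pinv I {..<d} K)"
    and pinv_left_inverse: "\<And>j j'. j < d \<Longrightarrow> j' < d \<Longrightarrow>
      (\<Sum>i\<in>I. pinv I {..<d} K j i * K i j') = (if j = j' then 1 else 0)"
proof -
  have "\<forall>i. \<exists>z. \<forall>j<d. (\<Sum>j'<d. gram j j' * z j') = K i j"
    using injective_square_matrix_surjective[OF gram_inj] by blast
  then obtain Z where Z: "\<And>i. \<forall>j<d. (\<Sum>j'<d. gram j j' * Z i j') = K i j"
    by metis
  \<comment> \<open>\<open>X = (K\<^sup>T K)\<^sup>-\<^sup>1 K\<^sup>T\<close>, extended by zero\<close>
  define X where "X j i = (if j < d \<and> i \<in> I then Z i j else 0)" for j i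
  have GX: "(\<Sum>j'<d. gram j j' * X j' i) = K i j" if "j < d" "i \<in> I" for j i
    using Z[of i] that by (simp add: X_def)
  have X0: "\<forall>j i. j \<notin> {..<d} \<or> i \<notin> I \<longrightarrow> X j i = 0" by (auto simp: X_def)
  have "pinv I {..<d} K = X"
    unfolding pinv_def
  proof (rule the_equality)
    show "(\<forall>j i. j \<notin> {..<d} \<or> i \<notin> I \<longrightarrow> X j i = 0) \<and> penrose I {..<d} K X"
      using X0 gram_solution_penrose[OF GX] by blast
  next
    fix Y assume "(\<forall>j i. j \<notin> {..<d} \<or> i \<notin> I \<longrightarrow> Y j i = 0) \<and> penrose I {..<d} K Y"
    then show "Y = X" using penrose_unique[OF gram_solution_penrose[OF GX] X0] by blast
  qed
  then show "penrose I {..<d} K (pinv I {..<d} K)"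
    and "\<And>j j'. j < d \<Longrightarrow> j' < d \<Longrightarrow> (\<Sum>i\<in>I. pinv I {..<d} K j i * K i j') = (if j = j' then 1 else 0)"
    using gram_solution_penrose[OF GX] gram_solution_left_inverse[OF GX] by simp_all
qed

end

section \<open>Histories and their probabilities\<close>

lemma finite_hists [simp]: "finite (hists n :: ('ob::finite,'a::finite) hist set)"
  unfolding hists_def using finite_lists_length_eq[of "UNIV :: ('ob \<times> 'a) set" n] by simp

lemma hists_0 [simp]: "hists 0 = {[]}"
  by (auto simp: hists_def)

lemma sum_UNIV_prod:
  "(\<Sum>p\<in>(UNIV :: ('x::finite \<times> 'y::finite) set). g p) = (\<Sum>x\<in>UNIV. \<Sum>y\<in>UNIV. g (x, y))"
  by (simp add: sum.cartesian_product UNIV_Times_UNIV[symmetric] del: UNIV_Times_UNIV)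

lemma sum_hists_Suc:
  "(\<Sum>\<tau>\<in>hists (Suc n). g \<tau>) = (\<Sum>p\<in>(UNIV :: ('ob::finite \<times> 'a::finite) set). \<Sum>\<tau>\<in>hists n. g (p # \<tau>))"
proof -
  have hists_Suc: "hists (Suc n) = (\<lambda>(p, \<tau>). p # \<tau>) ` (UNIV \<times> hists n)"
    by (auto simp: hists_def length_Suc_conv image_iff)
  have "inj_on (\<lambda>(p, \<tau>). p # \<tau>) (UNIV \<times> (hists n :: ('ob,'a) hist set))"
    by (auto simp: inj_on_def)
  then show ?thesis
    unfolding hists_Suc by (simp add: sum.reindex sum.cartesian_product split_def)
qed

lemma sum_hists_add:
  "(\<Sum>\<tau>\<in>hists (l + n). g \<tau>) = (\<Sum>\<tau>0\<in>hists l. \<Sum>\<tau>\<in>hists n. g (\<tau>0 @ \<tau> :: ('ob::finite,'a::finite) hist))"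
proof (induction l arbitrary: g)
  case (Suc l)
  then show ?case
    using sum_hists_Suc[where n = "l + n" and g = g]
      sum_hists_Suc[where n = l and g = "\<lambda>\<tau>0. \<Sum>\<tau>\<in>hists n. g (\<tau>0 @ \<tau>)"]
    by simp
qed simp

fun obs_prob_after :: "('ob,'a) model \<Rightarrow> ('ob,'a) hist \<Rightarrow> ('ob,'a) hist \<Rightarrow> real" where
  "obs_prob_after f \<sigma> [] = 1"
| "obs_prob_after f \<sigma> ((ob, a) # \<tau>) = f \<sigma> ob * obs_prob_after f (\<sigma> @ [(ob, a)]) \<tau>"

fun pol_prob_after :: "('ob,'a) policy \<Rightarrow> ('ob,'a) hist \<Rightarrow> ('ob,'a) hist \<Rightarrow> real" where
  "pol_prob_after \<pi> \<sigma> [] = 1"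
| "pol_prob_after \<pi> \<sigma> ((ob, a) # \<tau>) = \<pi> \<sigma> ob a * pol_prob_after \<pi> (\<sigma> @ [(ob, a)]) \<tau>"

lemma pol_prob_Nil [simp]: "pol_prob \<pi> [] = 1"
  by (simp add: pol_prob_def)

lemma obs_prob_snoc: "obs_prob f (\<sigma> @ [(ob, a)]) = obs_prob f \<sigma> * f \<sigma> ob"
proof -
  have "(\<Prod>i<length \<sigma>. f (take i (\<sigma> @ [(ob, a)])) (fst ((\<sigma> @ [(ob, a)]) ! i)))
      = (\<Prod>i<length \<sigma>. f (take i \<sigma>) (fst (\<sigma> ! i)))"
    by (rule prod.cong) (auto simp: nth_append)
  then show ?thesis by (simp add: obs_prob_def nth_append)
qed

lemma pol_prob_snoc: "pol_prob \<pi> (\<sigma> @ [(ob, a)]) = pol_prob \<pi> \<sigma> * \<pi> \<sigma> ob a"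
proof -
  have "(\<Prod>i<length \<sigma>. \<pi> (take i (\<sigma> @ [(ob, a)]))
          (fst ((\<sigma> @ [(ob, a)]) ! i)) (snd ((\<sigma> @ [(ob, a)]) ! i)))
      = (\<Prod>i<length \<sigma>. \<pi> (take i \<sigma>) (fst (\<sigma> ! i)) (snd (\<sigma> ! i)))"
    by (rule prod.cong) (auto simp: nth_append)
  then show ?thesis by (simp add: pol_prob_def nth_append)
qed

lemma pol_prob_append: "pol_prob \<pi> (\<sigma> @ \<tau>) = pol_prob \<pi> \<sigma> * pol_prob_after \<pi> \<sigma> \<tau>"
proof (induction \<tau> arbitrary: \<sigma>)
  case Nil
  then show ?case by simp
next
  case (Cons p \<tau>)
  obtain ob a where p: "p = (ob, a)" by (cases p)
  have "pol_prob \<pi> (\<sigma> @ p # \<tau>) = pol_prob \<pi> ((\<sigma> @ [(ob, a)]) @ \<tau>)" by (simp add: p)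
  also have "\<dots> = pol_prob \<pi> (\<sigma> @ [(ob, a)]) * pol_prob_after \<pi> (\<sigma> @ [(ob, a)]) \<tau>"
    by (rule Cons.IH)
  also have "\<dots> = pol_prob \<pi> \<sigma> * \<pi> \<sigma> ob a * pol_prob_after \<pi> (\<sigma> @ [(ob, a)]) \<tau>"
    by (simp add: pol_prob_snoc)
  finally show ?case by (simp add: p)
qed

lemma obs_prob_after_nonneg:
  "valid_model H f \<Longrightarrow> length \<sigma> + length \<tau> \<le> H \<Longrightarrow> obs_prob_after f \<sigma> \<tau> \<ge> 0"
  by (induction f \<sigma> \<tau> rule: obs_prob_after.induct) (auto simp: valid_model_def)

lemma pol_prob_after_nonneg:
  "valid_policy H \<pi> \<Longrightarrow> length \<sigma> + length \<tau> \<le> H \<Longrightarrow> pol_prob_after \<pi> \<sigma> \<tau> \<ge> 0"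
  by (induction \<pi> \<sigma> \<tau> rule: pol_prob_after.induct) (auto simp: valid_policy_def)

lemma pol_prob_nonneg: "valid_policy H \<pi> \<Longrightarrow> length \<tau> \<le> H \<Longrightarrow> pol_prob \<pi> \<tau> \<ge> 0"
  using pol_prob_after_nonneg[of H \<pi> "[]" \<tau>] pol_prob_append[of \<pi> "[]" \<tau>] by simp

text \<open>The policy follows the actual history \<open>\<tau>0\<close>, while the model is run from a (core) history \<open>\<sigma>\<close>.\<close>

lemma sum_pol_prob_after_obs_prob_after_le_1:
  assumes "valid_policy H \<pi>" and "valid_model H f"
  shows "length \<tau>0 + n \<le> H \<Longrightarrow> length \<sigma> + n \<le> H \<Longrightarrow>
    (\<Sum>\<tau>\<in>hists n. pol_prob_after \<pi> \<tau>0 \<tau> * obs_prob_after f \<sigma> (\<tau> :: ('ob::finite,'a::finite) hist))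
      \<le> 1"
proof (induction n arbitrary: \<tau>0 \<sigma>)
  case (Suc n)
  have "(\<Sum>\<tau>\<in>hists (Suc n). pol_prob_after \<pi> \<tau>0 \<tau> * obs_prob_after f \<sigma> \<tau>)
     = (\<Sum>ob\<in>UNIV. \<Sum>a\<in>UNIV. \<pi> \<tau>0 ob a * f \<sigma> ob *
          (\<Sum>\<tau>\<in>hists n. pol_prob_after \<pi> (\<tau>0 @ [(ob, a)]) \<tau> * obs_prob_after f (\<sigma> @ [(ob, a)]) \<tau>))"
    by (simp add: sum_hists_Suc sum_UNIV_prod sum_distrib_left mult_ac)
  also have "\<dots> \<le> (\<Sum>ob\<in>UNIV. \<Sum>a\<in>UNIV. \<pi> \<tau>0 ob a * f \<sigma> ob * 1)"
    using Suc assms by (intro sum_mono mult_left_mono) (auto simp: valid_policy_def valid_model_def)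
  also have "\<dots> = (\<Sum>ob\<in>UNIV. f \<sigma> ob * (\<Sum>a\<in>UNIV. \<pi> \<tau>0 ob a))"
    by (simp add: sum_distrib_left mult_ac)
  also have "\<dots> = 1" using Suc.prems assms by (simp add: valid_policy_def valid_model_def)
  finally show ?case .
qed simp

section \<open>Test probabilities\<close>

lemma test_prob_ext_test:
  assumes "f \<sigma> ob \<ge> 0"
  shows "test_prob f \<sigma> (ext_test ob a u) = f \<sigma> ob * test_prob f (\<sigma> @ [(ob, a)]) u"
proof -
  obtain ts ol where u: "u = (ts, ol)" by (cases u)
  have prod_Cons: "(\<Prod>i<length ((ob, a) # ts).
        f (\<sigma> @ take i ((ob, a) # ts)) (fst (((ob, a) # ts) ! i)))
      = f \<sigma> ob * (\<Prod>i<length ts. f ((\<sigma> @ [(ob, a)]) @ take i ts) (fst (ts ! i)))"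
    by (simp add: prod.lessThan_Suc_shift del: prod.lessThan_Suc)
  consider "obs_prob f \<sigma> > 0" "f \<sigma> ob > 0" | "obs_prob f \<sigma> > 0" "f \<sigma> ob = 0" | "\<not> obs_prob f \<sigma> > 0"
    using assms by fastforce
  then show ?thesis
  proof cases
    case 1
    then have "obs_prob f (\<sigma> @ [(ob, a)]) > 0" by (simp add: obs_prob_snoc)
    with 1 show ?thesis using prod_Cons by (simp add: test_prob_def ext_test_def u)
  next
    case 2
    then show ?thesis using prod_Cons by (simp add: test_prob_def ext_test_def u)
  next
    case 3
    then have "\<not> obs_prob f (\<sigma> @ [(ob, a)]) > 0"
      using assms by (simp add: obs_prob_snoc mult_nonpos_nonneg not_less)
    with 3 show ?thesis by (simp add: test_prob_def ext_test_def u)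
  qed
qed

lemma test_prob_nonneg:
  assumes "valid_model H f" and "length \<rho> + length (fst t) < H"
  shows "test_prob f \<rho> t \<ge> 0"
  using assms unfolding test_prob_def valid_model_def
  by (auto intro!: prod_nonneg mult_nonneg_nonneg)

lemma finite_tests_at: "finite (tests_at H h :: ('ob::finite,'a::finite) test set)"
proof (rule finite_subset)
  show "tests_at H h \<subseteq> {xs :: ('ob \<times> 'a) list. set xs \<subseteq> UNIV \<and> length xs \<le> H} \<times> (UNIV :: 'ob set)"
    by (auto simp: tests_at_def)
  show "finite ({xs :: ('ob \<times> 'a) list. set xs \<subseteq> UNIV \<and> length xs \<le> H} \<times> (UNIV :: 'ob set))"
    by (intro finite_cartesian_product finite_lists_length_le) auto
qed

lemma finite_tests_with_actions: "finite {t :: ('ob::finite,'a::finite) test. test_actions t = A}"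
proof (rule finite_subset)
  show "{t :: ('ob,'a) test. test_actions t = A}
      \<subseteq> {xs. set xs \<subseteq> UNIV \<and> length xs = length A} \<times> UNIV"
    by (auto simp: test_actions_def dest: arg_cong[where f = length])
  show "finite ({xs :: ('ob \<times> 'a) list. set xs \<subseteq> UNIV \<and> length xs = length A} \<times> (UNIV :: 'ob set))"
    by (intro finite_cartesian_product finite_lists_length_eq) auto
qed

lemma sum_tests_with_actions_Cons:
  "(\<Sum>t\<in>{t :: ('ob::finite,'a::finite) test. test_actions t = a # A}. g t)
    = (\<Sum>ob\<in>UNIV. \<Sum>t\<in>{t. test_actions t = A}. g (ext_test ob a t))"
proof -
  let ?ext = "\<lambda>(ob, t). ext_test ob a t :: ('ob,'a) test"
  have tests_Cons:
    "{t :: ('ob,'a) test. test_actions t = a # A} = ?ext ` (UNIV \<times> {t. test_actions t = A})"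
  proof (rule set_eqI, rule iffI)
    fix t :: "('ob,'a) test" assume "t \<in> {t. test_actions t = a # A}"
    then obtain p ps where "fst t = p # ps" "snd p = a" "map snd ps = A"
      by (auto simp: test_actions_def map_eq_Cons_conv)
    then show "t \<in> ?ext ` (UNIV \<times> {t. test_actions t = A})"
      by (intro image_eqI[of _ _ "(fst p, (ps, snd t))"])
        (auto simp: test_actions_def ext_test_def prod_eq_iff)
  qed (auto simp: test_actions_def ext_test_def)
  have "inj_on ?ext (UNIV \<times> {t. test_actions t = A})"
    by (auto simp: inj_on_def prod_eq_iff ext_test_def)
  then show ?thesis
    unfolding tests_Cons by (simp add: sum.reindex sum.cartesian_product split_def)
qed

lemma sum_test_prob_with_actions:
  assumes valid: "valid_model H f" and len: "length \<rho> + length A < H"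
  shows "(\<Sum>t\<in>{t :: ('ob::finite,'a::finite) test. test_actions t = A}. test_prob f \<rho> t)
    = (if obs_prob f \<rho> > 0 then 1 else 0)"
  using len
proof (induction A arbitrary: \<rho>)
  case Nil
  have tests_Nil: "{t :: ('ob,'a) test. test_actions t = []} = (\<lambda>ol. ([], ol)) ` UNIV"
    by (auto simp: test_actions_def image_iff)
  have "inj (\<lambda>ol::'ob. ([] :: ('ob \<times> 'a) list, ol))" by (auto simp: inj_on_def)
  moreover have "(\<Sum>ol\<in>UNIV. f \<rho> ol) = 1" using valid Nil by (simp add: valid_model_def)
  ultimately show ?case unfolding tests_Nil by (simp add: sum.reindex test_prob_def)
next
  case (Cons a A)
  have f_nonneg: "\<And>ob. f \<rho> ob \<ge> 0" using valid Cons.prems by (simp add: valid_model_def)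
  have "(\<Sum>t\<in>{t. test_actions t = a # A}. test_prob f \<rho> t)
      = (\<Sum>ob\<in>UNIV. \<Sum>t\<in>{t. test_actions t = A}. test_prob f \<rho> (ext_test ob a t))"
    by (rule sum_tests_with_actions_Cons)
  also have "\<dots> = (\<Sum>ob\<in>UNIV. f \<rho> ob * (\<Sum>t\<in>{t. test_actions t = A}. test_prob f (\<rho> @ [(ob, a)]) t))"
    by (simp add: test_prob_ext_test[where f = f and \<sigma> = \<rho>, OF f_nonneg] sum_distrib_left)
  also have "\<dots> = (\<Sum>ob\<in>UNIV. f \<rho> ob * (if obs_prob f (\<rho> @ [(ob, a)]) > 0 then 1 else 0))"
    using Cons.IH[of "\<rho> @ [(ob, a)]" for ob] Cons.prems by simp
  also have "\<dots> = (if obs_prob f \<rho> > 0 then 1 else 0)"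
  proof (cases "obs_prob f \<rho> > 0")
    case True
    then have "(\<Sum>ob\<in>UNIV. f \<rho> ob * (if obs_prob f (\<rho> @ [(ob, a)]) > 0 then 1 else 0))
        = (\<Sum>ob\<in>UNIV. f \<rho> ob)"
      using f_nonneg by (intro sum.cong) (auto simp: obs_prob_snoc zero_less_mult_iff order_le_less)
    then show ?thesis using True valid Cons.prems by (simp add: valid_model_def)
  next
    case False
    then have "\<not> obs_prob f (\<rho> @ [(ob, a)]) > 0" for ob
      using f_nonneg[of ob] by (simp add: obs_prob_snoc mult_nonpos_nonneg not_less)
    then show ?thesis using False by simp
  qed
  finally show ?case .
qed

lemma norm1_test_prob_le_card_actions:
  assumes valid: "valid_model H f" and fin: "finite U'" and U': "U' \<subseteq> tests_at H (Suc k)"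
    and len: "length \<rho> = k"
  shows "norm1_on U' (test_prob f \<rho>) \<le> card (test_actions ` U')"
proof -
  have nonneg: "test_prob f \<rho> t \<ge> 0" if "length (fst t) + k < H" for t
    using test_prob_nonneg[OF valid] that len by simp
  have "norm1_on U' (test_prob f \<rho>) = (\<Sum>u\<in>U'. test_prob f \<rho> u)"
    unfolding norm1_on_def using U' nonneg by (intro sum.cong) (auto simp: tests_at_def)
  also have "\<dots> = (\<Sum>A\<in>test_actions ` U'. \<Sum>u\<in>{u\<in>U'. test_actions u = A}. test_prob f \<rho> u)"
    by (rule sum.image_gen[OF fin])
  also have "\<dots> \<le> (\<Sum>A\<in>test_actions ` U'. 1)"
  proof (rule sum_mono)
    fix A assume "A \<in> test_actions ` U'"
    then have lA: "length \<rho> + length A < H"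
      using U' len by (auto simp: tests_at_def test_actions_def)
    have "(\<Sum>u\<in>{u\<in>U'. test_actions u = A}. test_prob f \<rho> u)
        \<le> (\<Sum>t\<in>{t. test_actions t = A}. test_prob f \<rho> t)"
      using lA len by (intro sum_mono2[OF finite_tests_with_actions])
        (auto simp: test_actions_def intro!: nonneg)
    also have "\<dots> \<le> 1" using sum_test_prob_with_actions[OF valid lA] by simp
    finally show "(\<Sum>u\<in>{u\<in>U'. test_actions u = A}. test_prob f \<rho> u) \<le> 1" .
  qed
  finally show ?thesis by simp
qed

lemma expected_norm1_test_prob_le_card_actions:
  fixes \<sigma> :: "('ob::finite,'a::finite) hist"
  assumes pol: "valid_policy H \<pi>" and valid: "valid_model H f"
    and len: "length \<rho> = l" "length \<sigma> = l" "l + n < H"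
    and fin: "finite U'" and U': "U' \<subseteq> tests_at H (Suc (l + n))"
  shows "(\<Sum>\<tau>\<in>hists n.
      pol_prob_after \<pi> \<rho> \<tau> * (obs_prob_after f \<sigma> \<tau> * norm1_on U' (test_prob f (\<sigma> @ \<tau>))))
     \<le> card (test_actions ` U')"
proof -
  let ?N = "real (card (test_actions ` U'))"
  have "(\<Sum>\<tau>\<in>hists n.
      pol_prob_after \<pi> \<rho> \<tau> * (obs_prob_after f \<sigma> \<tau> * norm1_on U' (test_prob f (\<sigma> @ \<tau>))))
     \<le> (\<Sum>\<tau>\<in>hists n. pol_prob_after \<pi> \<rho> \<tau> * obs_prob_after f \<sigma> \<tau> * ?N)"
  proof (rule sum_mono)
    fix \<tau> :: "('ob,'a) hist" assume "\<tau> \<in> hists n"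
    then have "length \<tau> = n" by (simp add: hists_def)
    then have "norm1_on U' (test_prob f (\<sigma> @ \<tau>)) \<le> ?N"
      using norm1_test_prob_le_card_actions[OF valid fin U'] len by simp
    moreover have "pol_prob_after \<pi> \<rho> \<tau> \<ge> 0" "obs_prob_after f \<sigma> \<tau> \<ge> 0"
      using pol_prob_after_nonneg[OF pol] obs_prob_after_nonneg[OF valid] \<open>length \<tau> = n\<close> len by auto
    ultimately show "pol_prob_after \<pi> \<rho> \<tau> *
        (obs_prob_after f \<sigma> \<tau> * norm1_on U' (test_prob f (\<sigma> @ \<tau>)))
       \<le> pol_prob_after \<pi> \<rho> \<tau> * obs_prob_after f \<sigma> \<tau> * ?N"
      by (simp add: mult.assoc mult_left_mono)
  qed
  also have "\<dots> = (\<Sum>\<tau>\<in>hists n. pol_prob_after \<pi> \<rho> \<tau> * obs_prob_after f \<sigma> \<tau>) * ?N"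
    by (simp add: sum_distrib_right)
  also have "\<dots> \<le> 1 * ?N"
    using sum_pol_prob_after_obs_prob_after_le_1[OF pol valid] len by (intro mult_right_mono) auto
  finally show ?thesis by simp
qed

lemma card_actions_le_UA_card: "l \<in> {1..H} \<Longrightarrow> card (test_actions ` U l) \<le> UA_card H U"
  unfolding UA_card_def by (intro Max_ge) auto

section \<open>The rank of a PSR and its core matrices\<close>

lemma lin_indep_hists_length_le:
  fixes f :: "('ob::finite,'a::finite) model"
  assumes indep: "lin_indep_hists f T hs" and fin: "finite T"
  shows "length hs \<le> card T"
proof -
  define w where "w j = (\<lambda>t. if t \<in> T then test_prob f (hs ! j) t else 0)" for j
  define e where "e t = (\<lambda>s. if s = t then 1 else (0::real))" for t :: "('ob,'a) test"
  show ?thesis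
  proof (rule indep_in_span_length_le_card[where w = w and e = e, OF fin])
    fix j
    have "w j x = (\<Sum>t\<in>T. test_prob f (hs ! j) t * e t x)" for x
      using fin by (simp add: w_def e_def if_distrib cong: if_cong)
    then show "\<exists>b. w j = (\<lambda>x. \<Sum>t\<in>T. b t * e t x)"
      by (intro exI[of _ "test_prob f (hs ! j)"]) (simp add: fun_eq_iff)
  next
    fix c assume "\<And>x. (\<Sum>j<length hs. c j * w j x) = 0"
    then have "\<forall>t\<in>T. (\<Sum>j<length hs. c j * test_prob f (hs ! j) t) = 0"
      by (metis (no_types, lifting) sum.cong w_def)
    then show "\<forall>j<length hs. c j = 0" using indep unfolding lin_indep_hists_def by blast
  qed
qed

lemma finite_lin_indep_lengths:
  "finite {n. \<exists>hs. set hs \<subseteq> hists l \<and> length hs = n \<and>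
     lin_indep_hists f (tests_at H (Suc l) :: ('ob::finite,'a::finite) test set) hs}"
  by (rule finite_subset[of _ "{..card (tests_at H (Suc l) :: ('ob,'a) test set)}"])
    (auto intro: lin_indep_hists_length_le[OF _ finite_tests_at])

lemma d_PSR_attained:
  fixes f :: "('ob::finite,'a::finite) model"
  obtains gs where "set gs \<subseteq> hists l" "length gs = d_PSR H f l"
    "lin_indep_hists f (tests_at H (Suc l)) gs"
proof -
  let ?N = "{n. \<exists>hs. set hs \<subseteq> hists l \<and> length hs = n \<and> lin_indep_hists f (tests_at H (Suc l)) hs}"
  have "lin_indep_hists f (tests_at H (Suc l)) []" by (simp add: lin_indep_hists_def)
  then have "0 \<in> ?N" by (auto intro!: exI[of _ "[] :: ('ob,'a) hist list"])
  then have "Max ?N \<in> ?N" by (intro Max_in[OF finite_lin_indep_lengths]) blast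
  with that show ?thesis unfolding d_PSR_def by blast
qed

lemma lin_indep_hists_snoc:
  assumes indep: "lin_indep_hists f T gs"
    and not_in_span: "\<nexists>c. \<forall>t\<in>T. test_prob f \<tau> t = (\<Sum>j<length gs. c j * test_prob f (gs ! j) t)"
  shows "lin_indep_hists f T (gs @ [\<tau>])"
  unfolding lin_indep_hists_def
proof (rule allI, rule impI)
  fix c assume dep: "\<forall>t\<in>T. (\<Sum>j<length (gs @ [\<tau>]). c j * test_prob f ((gs @ [\<tau>]) ! j) t) = 0"
  let ?d = "length gs"
  have dep_t: "(\<Sum>j<?d. c j * test_prob f (gs ! j) t) + c ?d * test_prob f \<tau> t = 0" if "t \<in> T" for t
  proof -
    have "(\<Sum>j<?d. c j * test_prob f ((gs @ [\<tau>]) ! j) t) = (\<Sum>j<?d. c j * test_prob f (gs ! j) t)"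
      by (rule sum.cong) (auto simp: nth_append)
    then show ?thesis using dep that by (simp add: nth_append)
  qed
  have "c ?d = 0"
  proof (rule ccontr)
    assume "c ?d \<noteq> 0"
    have "test_prob f \<tau> t = (\<Sum>j<?d. (- c j / c ?d) * test_prob f (gs ! j) t)" if "t \<in> T" for t
    proof -
      have "(\<Sum>j<?d. (- c j / c ?d) * test_prob f (gs ! j) t)
          = (\<Sum>j<?d. c j * test_prob f (gs ! j) t) * (- 1 / c ?d)"
        by (subst sum_distrib_right) (rule sum.cong, simp_all)
      also have "(\<Sum>j<?d. c j * test_prob f (gs ! j) t) = - (c ?d * test_prob f \<tau> t)"
        using dep_t[OF that] by (simp add: eq_neg_iff_add_eq_0)
      finally show ?thesis using \<open>c ?d \<noteq> 0\<close> by simp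
    qed
    then have "\<exists>c'. \<forall>t\<in>T. test_prob f \<tau> t = (\<Sum>j<?d. c' j * test_prob f (gs ! j) t)"
      by (intro exI[of _ "\<lambda>j. - c j / c ?d"]) simp
    with not_in_span show False by simp
  qed
  then have "\<forall>t\<in>T. (\<Sum>j<?d. c j * test_prob f (gs ! j) t) = 0" using dep_t by simp
  then have "\<forall>j<?d. c j = 0" using indep unfolding lin_indep_hists_def by blast
  with \<open>c ?d = 0\<close> show "\<forall>j<length (gs @ [\<tau>]). c j = 0" using less_Suc_eq by auto
qed

lemma d_PSR_spans:
  fixes f :: "('ob::finite,'a::finite) model"
  assumes gs: "set gs \<subseteq> hists l" "length gs = d_PSR H f l"
    "lin_indep_hists f (tests_at H (Suc l)) gs"
    and \<tau>: "\<tau> \<in> hists l"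
  shows "\<exists>c. \<forall>t\<in>tests_at H (Suc l). test_prob f \<tau> t = (\<Sum>j<length gs. c j * test_prob f (gs ! j) t)"
proof (rule ccontr)
  assume "\<not> ?thesis"
  then have "lin_indep_hists f (tests_at H (Suc l)) (gs @ [\<tau>])"
    by (intro lin_indep_hists_snoc[OF gs(3)]) simp
  then have "Suc (length gs) \<le> d_PSR H f l"
    using gs(1) \<tau> unfolding d_PSR_def
    by (intro Max_ge[OF finite_lin_indep_lengths]) (auto intro!: exI[of _ "gs @ [\<tau>]"])
  then show False using gs(2) by simp
qed

lemma core_test_set_lin_comb:
  assumes core: "is_core_test_set H f U' (Suc l)"
    and \<tau>: "\<tau> \<in> hists l" and g: "\<forall>k\<in>Ks. g k \<in> hists l"
    and comb: "\<forall>u\<in>U'. test_prob f \<tau> u = (\<Sum>k\<in>Ks. b k * test_prob f (g k) u)"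
    and t: "t \<in> tests_at H (Suc l)"
  shows "test_prob f \<tau> t = (\<Sum>k\<in>Ks. b k * test_prob f (g k) t)"
proof -
  have "\<exists>mt. \<forall>\<rho>\<in>hists l. test_prob f \<rho> t = inner_on U' mt (test_prob f \<rho>)"
    using core t unfolding is_core_test_set_def by simp
  then obtain mt where mt: "\<forall>\<rho>\<in>hists l. test_prob f \<rho> t = inner_on U' mt (test_prob f \<rho>)" ..
  have "test_prob f \<tau> t = (\<Sum>u\<in>U'. mt u * (\<Sum>k\<in>Ks. b k * test_prob f (g k) u))"
    using mt \<tau> comb by (simp add: inner_on_def)
  also have "\<dots> = (\<Sum>k\<in>Ks. b k * inner_on U' mt (test_prob f (g k)))"
    unfolding inner_on_def sum_distrib_left
    by (simp add: sum.swap[where A = U'] sum_distrib_left mult_ac)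
  also have "\<dots> = (\<Sum>k\<in>Ks. b k * test_prob f (g k) t)"
    using mt g by simp
  finally show ?thesis .
qed

lemma core_choices_span_without_dependent:
  fixes f :: "('ob::finite,'a::finite) model"
  assumes core: "is_core_test_set H f (U (Suc l)) (Suc l)"
    and hs: "hs \<in> core_choices H U f l"
    and dep: "\<forall>u\<in>U (Suc l). (\<Sum>j<length hs. c j * test_prob f (hs ! j) u) = 0"
    and j0: "j0 < length hs" "c j0 \<noteq> 0"
    and \<tau>: "\<tau> \<in> hists l"
  shows "\<exists>b. \<forall>t\<in>tests_at H (Suc l).
    test_prob f \<tau> t = (\<Sum>j\<in>{..<length hs} - {j0}. b j * test_prob f (hs ! j) t)"
proof -
  let ?Ks = "{..<length hs} - {j0}"
  obtain a where a: "\<forall>u\<in>U (Suc l). test_prob f \<tau> u = (\<Sum>j<length hs. a j * test_prob f (hs ! j) u)"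
    using hs \<tau> unfolding core_choices_def by blast
  have "set hs \<subseteq> hists l" using hs by (simp add: core_choices_def)
  then have hs_hists: "\<forall>j\<in>?Ks. hs ! j \<in> hists l" by (auto dest: nth_mem)
  let ?b = "\<lambda>j. a j - a j0 * c j / c j0"
  have comb: "\<forall>u\<in>U (Suc l). test_prob f \<tau> u = (\<Sum>j\<in>?Ks. ?b j * test_prob f (hs ! j) u)"
  proof
    fix u assume u: "u \<in> U (Suc l)"
    then have "(\<Sum>j<length hs. c j * test_prob f (hs ! j) u) = 0" using dep by blast
    from lin_comb_remove_dependent[OF j0 this, of a]
    show "test_prob f \<tau> u = (\<Sum>j\<in>?Ks. ?b j * test_prob f (hs ! j) u)" using a u by simp
  qed
  have "\<forall>t\<in>tests_at H (Suc l). test_prob f \<tau> t = (\<Sum>j\<in>?Ks. ?b j * test_prob f (hs ! j) t)"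
    using core_test_set_lin_comb[OF core \<tau> hs_hists comb] by blast
  then show ?thesis by (intro exI[of _ ?b])
qed

text \<open>If the columns of a candidate core matrix were dependent on \<open>U\<close>, one column could be dropped
  while still spanning all predictive states, which contradicts the rank \<open>d_PSR\<close>.\<close>

lemma core_choices_lin_indep:
  fixes f :: "('ob::finite,'a::finite) model"
  assumes core: "is_core_test_set H f (U (Suc l)) (Suc l)"
    and hs: "hs \<in> core_choices H U f l"
    and dep: "\<forall>u\<in>U (Suc l). (\<Sum>j<length hs. c j * test_prob f (hs ! j) u) = 0"
  shows "\<forall>j<length hs. c j = 0"
proof (rule ccontr)
  assume "\<not> ?thesis"
  then obtain j0 where j0: "j0 < length hs" "c j0 \<noteq> 0" by auto
  let ?T = "tests_at H (Suc l) :: ('ob,'a) test set"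
  let ?Ks = "{..<length hs} - {j0}"
  obtain gs where gs: "set gs \<subseteq> hists l" "length gs = d_PSR H f l" "lin_indep_hists f ?T gs"
    by (rule d_PSR_attained)
  define w where "w i = (\<lambda>t. if t \<in> ?T then test_prob f (gs ! i) t else 0)" for i
  define e where "e j = (\<lambda>t. if t \<in> ?T then test_prob f (hs ! j) t else 0)" for j
  have "length gs \<le> card ?Ks"
  proof (rule indep_in_span_length_le_card[where w = w and e = e])
    fix c' assume dep_gs: "\<And>x. (\<Sum>j<length gs. c' j * w j x) = 0"
    have "\<forall>t\<in>?T. (\<Sum>j<length gs. c' j * test_prob f (gs ! j) t) = 0"
    proof
      fix t assume "t \<in> ?T"
      then show "(\<Sum>j<length gs. c' j * test_prob f (gs ! j) t) = 0"
        using dep_gs[of t] by (simp add: w_def)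
    qed
    then show "\<forall>j<length gs. c' j = 0" using gs(3) unfolding lin_indep_hists_def by blast
  next
    fix i assume "i < length gs"
    then have "gs ! i \<in> hists l" using gs(1) nth_mem by blast
    then obtain b where "\<forall>t\<in>?T. test_prob f (gs ! i) t = (\<Sum>j\<in>?Ks. b j * test_prob f (hs ! j) t)"
      using core_choices_span_without_dependent[OF core hs dep j0] by blast
    then have "w i = (\<lambda>t. \<Sum>j\<in>?Ks. b j * e j t)" by (auto simp: w_def e_def fun_eq_iff)
    then show "\<exists>b. w i = (\<lambda>x. \<Sum>k\<in>?Ks. b k * e k x)" by (intro exI[of _ b])
  qed simp
  moreover have "length hs = d_PSR H f l" using hs by (simp add: core_choices_def)
  ultimately show False using gs(2) j0(1) by simp
qed

section \<open>The observable operators\<close>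

lemma M_app_diff:
  "M_app U m f l ob a (\<lambda>v. x v - y v) = (\<lambda>v. M_app U m f l ob a x v - M_app U m f l ob a y v)"
  by (auto simp: M_app_def inner_on_def algebra_simps sum_subtractf)

lemma M_app_add:
  "M_app U m f l ob a (\<lambda>v. x v + y v) = (\<lambda>v. M_app U m f l ob a x v + M_app U m f l ob a y v)"
  by (auto simp: M_app_def inner_on_def algebra_simps sum.distrib)

lemma M_app_sum:
  "M_app U m f l ob a (\<lambda>v. \<Sum>j\<in>J. c j * x j v) = (\<lambda>v. \<Sum>j\<in>J. c j * M_app U m f l ob a (x j) v)"
  by (auto simp: M_app_def inner_on_def sum_distrib_left sum.swap[of _ J] mult.left_commute)

lemma M_seq_diff: "M_seq U m f l \<tau> (\<lambda>v. x v - y v) u = M_seq U m f l \<tau> x u - M_seq U m f l \<tau> y u"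
  by (induction \<tau> arbitrary: l x y) (auto simp: M_app_diff)

lemma M_seq_add: "M_seq U m f l \<tau> (\<lambda>v. x v + y v) u = M_seq U m f l \<tau> x u + M_seq U m f l \<tau> y u"
  by (induction \<tau> arbitrary: l x y) (auto simp: M_app_add)

lemma M_seq_sum: "M_seq U m f l \<tau> (\<lambda>v. \<Sum>j\<in>J. c j * x j v) u = (\<Sum>j\<in>J. c j * M_seq U m f l \<tau> (x j) u)"
  by (induction \<tau> arbitrary: l x) (auto simp: M_app_sum)

lemma M_seq_cong:
  assumes "\<forall>v\<in>U l. x v = y v" and "u \<in> U (l + length \<tau>)"
  shows "M_seq U m f l \<tau> x u = M_seq U m f l \<tau> y u"
proof (cases \<tau>)
  case Nil
  then show ?thesis using assms by simp
next
  case (Cons p \<tau>')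
  obtain ob a where p: "p = (ob, a)" by (cases p)
  have "M_app U m f l ob a x = M_app U m f l ob a y"
    using assms(1) by (auto simp: M_app_def inner_on_def intro!: sum.cong)
  then show ?thesis by (simp add: Cons p)
qed

lemma M_seq_telescope:
  "M_seq U m g s \<tau> x u - M_seq U m f s \<tau> y u =
   M_seq U m g s \<tau> (\<lambda>v. x v - y v) u +
   (\<Sum>i<length \<tau>. M_seq U m g (Suc (s + i)) (drop (Suc i) \<tau>)
      (\<lambda>v. M_app U m g (s + i) (fst (\<tau> ! i)) (snd (\<tau> ! i)) (M_seq U m f s (take i \<tau>) y) v
         - M_app U m f (s + i) (fst (\<tau> ! i)) (snd (\<tau> ! i)) (M_seq U m f s (take i \<tau>) y) v) u)"
proof (induction \<tau> arbitrary: s x y)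
  case Nil
  then show ?case by (simp add: M_seq_diff)
next
  case (Cons p \<tau>)
  obtain ob a where p: "p = (ob, a)" by (cases p)
  let ?Mg = "M_app U m g s ob a" and ?Mf = "M_app U m f s ob a"
  have "M_seq U m g s (p # \<tau>) x u - M_seq U m f s (p # \<tau>) y u
     = M_seq U m g (Suc s) \<tau> (?Mg x) u - M_seq U m f (Suc s) \<tau> (?Mf y) u" by (simp add: p)
  also have "\<dots> = M_seq U m g (Suc s) \<tau> (\<lambda>v. ?Mg x v - ?Mf y v) u +
   (\<Sum>i<length \<tau>. M_seq U m g (Suc (Suc s + i)) (drop (Suc i) \<tau>)
      (\<lambda>v. M_app U m g (Suc s + i) (fst (\<tau> ! i)) (snd (\<tau> ! i))
            (M_seq U m f (Suc s) (take i \<tau>) (?Mf y)) v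
         - M_app U m f (Suc s + i) (fst (\<tau> ! i)) (snd (\<tau> ! i))
            (M_seq U m f (Suc s) (take i \<tau>) (?Mf y)) v) u)"
    by (rule Cons.IH)
  also have "(\<lambda>v. ?Mg x v - ?Mf y v) = (\<lambda>v. ?Mg (\<lambda>w. x w - y w) v + (?Mg y v - ?Mf y v))"
    by (simp add: M_app_diff)
  also have "M_seq U m g (Suc s) \<tau> \<dots> u = M_seq U m g (Suc s) \<tau> (?Mg (\<lambda>w. x w - y w)) u
       + M_seq U m g (Suc s) \<tau> (\<lambda>v. ?Mg y v - ?Mf y v) u"
    by (rule M_seq_add)
  finally show ?case
    by (simp add: p sum.lessThan_Suc_shift del: sum.lessThan_Suc)
qed

lemma inner_on_lin_comb_eq:
  assumes "\<forall>w\<in>A. m' w = (\<Sum>j<d. c j * K w j)"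
    and "\<And>j. j < d \<Longrightarrow> (\<Sum>w\<in>A. K w j * y w) = (\<Sum>w\<in>A. K w j * y' w)"
  shows "inner_on A m' y = inner_on A m' y'"
proof -
  have expand: "inner_on A m' g = (\<Sum>j<d. c j * (\<Sum>w\<in>A. K w j * g w))" for g
  proof -
    have "inner_on A m' g = (\<Sum>w\<in>A. \<Sum>j<d. c j * (K w j * g w))"
      unfolding inner_on_def using assms(1)
      by (intro sum.cong) (simp_all add: sum_distrib_left sum_distrib_right mult_ac)
    also have "\<dots> = (\<Sum>j<d. \<Sum>w\<in>A. c j * (K w j * g w))" by (rule sum.swap)
    also have "\<dots> = (\<Sum>j<d. c j * (\<Sum>w\<in>A. K w j * g w))" by (simp add: sum_distrib_left)
    finally show ?thesis .
  qed
  show ?thesis unfolding expand using assms(2) by simp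
qed

section \<open>Models with core test sets\<close>

locale core_psr =
  fixes H :: nat and U :: "nat \<Rightarrow> ('ob::finite,'a::finite) test set" and f :: "('ob,'a) model"
  assumes valid: "valid_model H f"
    and core: "\<And>l. l \<in> {1..H} \<Longrightarrow> is_core_test_set H f (U l) l"
begin

lemma U_subset_tests_at: "l \<in> {1..H} \<Longrightarrow> U l \<subseteq> tests_at H l"
  using core by (simp add: is_core_test_set_def)

lemma finite_U: "l \<in> {1..H} \<Longrightarrow> finite (U l)"
  using U_subset_tests_at finite_tests_at by (rule finite_subset)

lemma pred_state_nonzero: "0 < H \<Longrightarrow> \<exists>u\<in>U 1. test_prob f [] u \<noteq> 0"
proof (rule ccontr)
  assume "0 < H" and "\<not> (\<exists>u\<in>U 1. test_prob f [] u \<noteq> 0)"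
  then have "\<forall>u\<in>U (Suc 0). test_prob f [] u = (\<Sum>k\<in>{}. 0)" by simp
  then have "test_prob f [] ([], ob) = 0" for ob
    using core_test_set_lin_comb[of H f "U (Suc 0)" 0 "[]" "{}"] core[of 1] \<open>0 < H\<close>
    by (simp add: tests_at_def)
  then have "f [] ob = 0" for ob by (simp add: test_prob_def obs_prob_def)
  moreover have "(\<Sum>ob\<in>UNIV. f [] ob) = 1" using valid \<open>0 < H\<close> by (simp add: valid_model_def)
  ultimately show False by simp
qed

lemma K_cols_in_core_choices:
  assumes "0 < l" and "l < H"
  shows "K_cols H U f l \<in> core_choices H U f l"
proof -
  let ?CC = "core_choices H U f l"
  obtain gs where gs: "set gs \<subseteq> hists l" "length gs = d_PSR H f l"
      "lin_indep_hists f (tests_at H (Suc l)) gs"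
    by (rule d_PSR_attained)
  have "U (Suc l) \<subseteq> tests_at H (Suc l)" using U_subset_tests_at \<open>l < H\<close> by simp
  then have "gs \<in> ?CC"
    using gs d_PSR_spans[OF gs] unfolding core_choices_def by fastforce
  moreover have "finite ?CC"
  proof (rule finite_subset)
    show "?CC \<subseteq> {hs. set hs \<subseteq> hists l \<and> length hs = d_PSR H f l}"
      by (auto simp: core_choices_def)
    show "finite {hs :: ('ob,'a) hist list. set hs \<subseteq> hists l \<and> length hs = d_PSR H f l}"
      by (rule finite_lists_length_eq) simp
  qed
  ultimately have "arg_min_on (Kdag_norm U f l) ?CC \<in> ?CC"
    by (intro arg_min_if_finite(1)) auto
  then show ?thesis using \<open>0 < l\<close> by (simp add: K_cols_def arg_min_on_def)
qed

lemma K_cols_subset_hists: "l < H \<Longrightarrow> set (K_cols H U f l) \<subseteq> hists l"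
  using K_cols_in_core_choices[of l] by (cases "l = 0") (auto simp: K_cols_def core_choices_def)

lemma K_cols_lin_indep:
  assumes "l < H"
    and dep: "\<forall>u\<in>U (Suc l).
      (\<Sum>j<length (K_cols H U f l). c j * test_prob f (K_cols H U f l ! j) u) = 0"
  shows "\<forall>j<length (K_cols H U f l). c j = 0"
proof (cases "l = 0")
  case True
  have "c 0 = 0"
  proof (rule ccontr)
    assume "c 0 \<noteq> 0"
    then have "\<forall>u\<in>U 1. test_prob f [] u = 0" using dep True by (simp add: K_cols_def)
    then show False using pred_state_nonzero \<open>l < H\<close> by auto
  qed
  then show ?thesis using True by (simp add: K_cols_def)
next
  case False
  then show ?thesis
    using core_choices_lin_indep[OF _ K_cols_in_core_choices dep] core \<open>l < H\<close> by simp
qed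

text \<open>In the notation of the paper, \<open>core_coords l y = K\<^sup>\<dagger>\<^bsub>l;f\<^esub> y\<close>.\<close>

definition core_coords :: "nat \<Rightarrow> (('ob,'a) test \<Rightarrow> real) \<Rightarrow> nat \<Rightarrow> real" where
  "core_coords l y j = (\<Sum>i\<in>U (Suc l).
     pinv (U (Suc l)) {..<length (K_cols H U f l)} (Kmat f (K_cols H U f l)) j i * y i)"

lemma core_matrix_pinv:
  assumes "l < H"
  shows penrose_core_matrix:
      "penrose (U (Suc l)) {..<length (K_cols H U f l)} (Kmat f (K_cols H U f l))
      (pinv (U (Suc l)) {..<length (K_cols H U f l)} (Kmat f (K_cols H U f l)))"
    and core_coords_column: "\<And>j j'. j < length (K_cols H U f l) \<Longrightarrow> j' < length (K_cols H U f l) \<Longrightarrow>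
      core_coords l (test_prob f (K_cols H U f l ! j')) j = (if j = j' then 1 else 0)"
proof -
  have fin: "finite (U (Suc l))" using finite_U \<open>l < H\<close> by simp
  have indep: "\<forall>j<length (K_cols H U f l). c j = 0"
    if "\<forall>i\<in>U (Suc l). (\<Sum>j<length (K_cols H U f l). c j * Kmat f (K_cols H U f l) i j) = 0" for c
    using K_cols_lin_indep[OF \<open>l < H\<close>] that by (simp add: Kmat_def)
  show "penrose (U (Suc l)) {..<length (K_cols H U f l)} (Kmat f (K_cols H U f l))
      (pinv (U (Suc l)) {..<length (K_cols H U f l)} (Kmat f (K_cols H U f l)))"
    by (rule penrose_pinv[OF fin]) (rule indep)
  show "core_coords l (test_prob f (K_cols H U f l ! j')) j = (if j = j' then 1 else 0)"
    if "j < length (K_cols H U f l)" "j' < length (K_cols H U f l)" for j j'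
  proof -
    have "(\<Sum>i\<in>U (Suc l). pinv (U (Suc l)) {..<length (K_cols H U f l)} (Kmat f (K_cols H U f l)) j i
        * Kmat f (K_cols H U f l) i j') = (if j = j' then 1 else 0)"
      by (rule pinv_left_inverse[OF fin _ that]) (rule indep)
    then show ?thesis by (simp add: core_coords_def Kmat_def)
  qed
qed

lemma core_coords_transpose_proj:
  assumes "l < H" and "j < length (K_cols H U f l)"
  shows "(\<Sum>w\<in>U (Suc l). test_prob f (K_cols H U f l ! j) w * y w)
    = (\<Sum>w\<in>U (Suc l). test_prob f (K_cols H U f l ! j) w *
        (\<Sum>j'<length (K_cols H U f l). core_coords l y j' * test_prob f (K_cols H U f l ! j') w))"
  using penrose_transpose_proj[OF penrose_core_matrix[OF \<open>l < H\<close>], of j y]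
    \<open>j < length (K_cols H U f l)\<close>
  by (simp add: core_coords_def Kmat_def)

end

section \<open>Propagation of errors through well-conditioned models\<close>

locale well_conditioned_psr = core_psr H U f
  for H :: nat and U :: "nat \<Rightarrow> ('ob::finite,'a::finite) test set" and f :: "('ob,'a) model" +
  fixes m :: "('ob,'a) model \<Rightarrow> nat \<Rightarrow> ('ob,'a) test \<Rightarrow> ('ob,'a) test \<Rightarrow> real" and \<alpha> :: real
  assumes alpha_pos: "\<alpha> > 0"
    and Kdag: "\<And>l. l < H \<Longrightarrow> Kdag_norm U f l (K_cols H U f l) \<le> 1 / \<alpha>"
    and m_repr: "\<And>l ob a u \<tau>. l \<in> {1..<H} \<Longrightarrow> u \<in> U (Suc l) \<Longrightarrow> \<tau> \<in> hists (l - 1) \<Longrightarrow>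
        test_prob f \<tau> (ext_test ob a u) = inner_on (U l) (m f l (ext_test ob a u)) (test_prob f \<tau>)"
    and m_colspace: "\<And>l ob a u. l \<in> {1..<H} \<Longrightarrow> u \<in> U (Suc l) \<Longrightarrow>
        in_colspace_K H U f (l - 1) (m f l (ext_test ob a u))"
begin

lemma M_app_pred_state:
  assumes l: "l \<in> {1..<H}" and \<sigma>: "\<sigma> \<in> hists (l - 1)"
    and x: "\<forall>w\<in>U l. x w = c * test_prob f \<sigma> w" and v: "v \<in> U (Suc l)"
  shows "M_app U m f l ob a x v = c * f \<sigma> ob * test_prob f (\<sigma> @ [(ob, a)]) v"
proof -
  have "f \<sigma> ob \<ge> 0" using valid l \<sigma> by (auto simp: valid_model_def hists_def)
  have "M_app U m f l ob a x v = c * inner_on (U l) (m f l (ext_test ob a v)) (test_prob f \<sigma>)"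
    using x by (simp add: M_app_def inner_on_def sum_distrib_left mult_ac)
  also have "\<dots> = c * test_prob f \<sigma> (ext_test ob a v)" using m_repr[OF l v \<sigma>] by simp
  also have "\<dots> = c * f \<sigma> ob * test_prob f (\<sigma> @ [(ob, a)]) v"
    using test_prob_ext_test[where f = f and \<sigma> = \<sigma>, OF \<open>f \<sigma> ob \<ge> 0\<close>] by simp
  finally show ?thesis .
qed

lemma M_seq_pred_state:
  "1 \<le> l \<Longrightarrow> l + length \<tau> \<le> H \<Longrightarrow> \<sigma> \<in> hists (l - 1) \<Longrightarrow> \<forall>w\<in>U l. x w = c * test_prob f \<sigma> w \<Longrightarrow>
    u \<in> U (l + length \<tau>) \<Longrightarrow> M_seq U m f l \<tau> x u = c * obs_prob_after f \<sigma> \<tau> * test_prob f (\<sigma> @ \<tau>) u"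
proof (induction \<tau> arbitrary: l \<sigma> x c)
  case (Cons p \<tau>)
  obtain ob a where p: "p = (ob, a)" by (cases p)
  have "l \<in> {1..<H}" using Cons.prems by simp
  then have "\<forall>v\<in>U (Suc l). M_app U m f l ob a x v = (c * f \<sigma> ob) * test_prob f (\<sigma> @ [(ob, a)]) v"
    using M_app_pred_state Cons.prems by simp
  moreover have "\<sigma> @ [(ob, a)] \<in> hists (Suc l - 1)"
    using Cons.prems by (simp add: hists_def)
  ultimately have "M_seq U m f (Suc l) \<tau> (M_app U m f l ob a x) u
      = (c * f \<sigma> ob) * obs_prob_after f (\<sigma> @ [(ob, a)]) \<tau> * test_prob f ((\<sigma> @ [(ob, a)]) @ \<tau>) u"
    using Cons.prems by (intro Cons.IH) simp_all
  then show ?case by (simp add: p mult_ac)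
qed simp

text \<open>The rows of \<open>M\<^bsub>o,a,l+1\<^esub>\<close> lie in the column space of \<open>K\<^sub>l\<close>, on which \<open>y\<close> and
  \<open>K\<^sub>l K\<^sub>l\<^sup>\<dagger> y\<close> have the same inner products.\<close>

lemma M_app_core_proj:
  assumes "Suc l < H" and v: "v \<in> U (Suc (Suc l))"
  shows "M_app U m f (Suc l) ob a y v = M_app U m f (Suc l) ob a
    (\<lambda>w. \<Sum>j<length (K_cols H U f l). core_coords l y j * test_prob f (K_cols H U f l ! j) w) v"
proof -
  let ?hs = "K_cols H U f l"
  obtain c where c: "\<forall>w\<in>U (Suc l).
      m f (Suc l) (ext_test ob a v) w = (\<Sum>j<length ?hs. c j * test_prob f (?hs ! j) w)"
    using m_colspace[of "Suc l" v ob a] assms by (auto simp: in_colspace_K_def Let_def)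
  have "inner_on (U (Suc l)) (m f (Suc l) (ext_test ob a v)) y
      = inner_on (U (Suc l)) (m f (Suc l) (ext_test ob a v))
          (\<lambda>w. \<Sum>j<length ?hs. core_coords l y j * test_prob f (?hs ! j) w)"
  proof (rule inner_on_lin_comb_eq[OF c])
    fix j assume "j < length ?hs"
    with \<open>Suc l < H\<close> show "(\<Sum>w\<in>U (Suc l). test_prob f (?hs ! j) w * y w)
        = (\<Sum>w\<in>U (Suc l). test_prob f (?hs ! j) w *
            (\<Sum>j<length ?hs. core_coords l y j * test_prob f (?hs ! j) w))"
      by (intro core_coords_transpose_proj) simp_all
  qed
  then show ?thesis by (simp add: M_app_def)
qed

lemma M_seq_core_expansion:
  assumes "l < h" "h < H" and \<tau>: "\<tau> \<in> hists (h - l)" and u: "u \<in> U (Suc h)"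
  shows "M_seq U m f (Suc l) \<tau> y u = (\<Sum>j<length (K_cols H U f l).
      core_coords l y j *
        (obs_prob_after f (K_cols H U f l ! j) \<tau> * test_prob f (K_cols H U f l ! j @ \<tau>) u))"
proof -
  let ?hs = "K_cols H U f l"
  let ?proj = "\<lambda>w. \<Sum>j<length ?hs. core_coords l y j * test_prob f (?hs ! j) w"
  obtain ob a \<tau>' where \<tau>_Cons: "\<tau> = (ob, a) # \<tau>'" and "length \<tau>' = h - Suc l"
    using \<tau> \<open>l < h\<close> by (cases \<tau>) (auto simp: hists_def)
  have "Suc l < H" using assms by simp
  then have "\<forall>v\<in>U (Suc (Suc l)). M_app U m f (Suc l) ob a y v = M_app U m f (Suc l) ob a ?proj v"
    using M_app_core_proj by blast
  then have "M_seq U m f (Suc (Suc l)) \<tau>' (M_app U m f (Suc l) ob a y) u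
      = M_seq U m f (Suc (Suc l)) \<tau>' (M_app U m f (Suc l) ob a ?proj) u"
    by (rule M_seq_cong) (use u \<open>length \<tau>' = h - Suc l\<close> \<open>l < h\<close> in simp)
  then have "M_seq U m f (Suc l) \<tau> y u = M_seq U m f (Suc l) \<tau> ?proj u"
    by (simp add: \<tau>_Cons)
  also have "\<dots> = (\<Sum>j<length ?hs.
      core_coords l y j * M_seq U m f (Suc l) \<tau> (test_prob f (?hs ! j)) u)"
    by (rule M_seq_sum)
  also have "\<dots> = (\<Sum>j<length ?hs.
      core_coords l y j * (obs_prob_after f (?hs ! j) \<tau> * test_prob f (?hs ! j @ \<tau>) u))"
  proof (rule sum.cong[OF refl])
    fix j assume "j \<in> {..<length ?hs}"
    then have "?hs ! j \<in> set ?hs" by simp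
    moreover have "set ?hs \<subseteq> hists l" using K_cols_subset_hists assms by simp
    ultimately have "?hs ! j \<in> hists (Suc l - 1)" by auto
    then show "core_coords l y j * M_seq U m f (Suc l) \<tau> (test_prob f (?hs ! j)) u
        = core_coords l y j * (obs_prob_after f (?hs ! j) \<tau> * test_prob f (?hs ! j @ \<tau>) u)"
      using M_seq_pred_state[where c = 1] assms by (simp add: hists_def)
  qed
  finally show ?thesis .
qed

lemma sum_abs_core_coords_le:
  assumes "l < H"
  shows "(\<Sum>j<length (K_cols H U f l). \<bar>core_coords l y j\<bar>) \<le> norm1_on (U (Suc l)) y / \<alpha>"
proof -
  let ?d = "length (K_cols H U f l)"
  let ?X = "pinv (U (Suc l)) {..<?d} (Kmat f (K_cols H U f l))"
  have "(\<Sum>j<?d. \<bar>core_coords l y j\<bar>) \<le> opnorm11 (U (Suc l)) {..<?d} ?X * norm1_on (U (Suc l)) y"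
    unfolding core_coords_def norm1_on_def using finite_U assms by (intro opnorm11_bound) simp
  also have "\<dots> \<le> 1 / \<alpha> * norm1_on (U (Suc l)) y"
    using Kdag[OF assms] norm1_on_nonneg by (intro mult_right_mono) (simp_all add: Kdag_norm_def)
  finally show ?thesis by simp
qed

lemma one_le_UA_card_div_alpha:
  assumes "0 < H"
  shows "1 \<le> real (UA_card H U) / \<alpha>"
proof -
  have K0: "K_cols H U f 0 = [[]]" by (simp add: K_cols_def)
  have "1 = core_coords 0 (test_prob f []) 0"
    using core_coords_column[OF assms, of 0 0] by (simp add: K0)
  also have "\<dots> \<le> (\<Sum>j<length (K_cols H U f 0). \<bar>core_coords 0 (test_prob f []) j\<bar>)"
    by (simp add: K0)
  also have "\<dots> \<le> norm1_on (U 1) (test_prob f []) / \<alpha>"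
    using sum_abs_core_coords_le[OF assms] by simp
  also have "\<dots> \<le> real (UA_card H U) / \<alpha>"
  proof (intro divide_right_mono)
    have "norm1_on (U 1) (test_prob f []) \<le> card (test_actions ` U 1)"
      by (rule norm1_test_prob_le_card_actions[OF valid, where k = 0])
        (use finite_U U_subset_tests_at assms in auto)
    also have "\<dots> \<le> UA_card H U" by (intro of_nat_mono card_actions_le_UA_card) (use assms in simp)
    finally show "norm1_on (U 1) (test_prob f []) \<le> real (UA_card H U)" by simp
  qed (use alpha_pos in simp)
  finally show ?thesis .
qed

lemma norm1_M_seq_le_core_expansion:
  assumes "l < h" "h < H" and \<tau>: "\<tau> \<in> hists (h - l)"
  shows "norm1_on (U (Suc h)) (M_seq U m f (Suc l) \<tau> y)
    \<le> (\<Sum>j<length (K_cols H U f l). \<bar>core_coords l y j\<bar> *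
          (obs_prob_after f (K_cols H U f l ! j) \<tau> *
            norm1_on (U (Suc h)) (test_prob f (K_cols H U f l ! j @ \<tau>))))"
proof -
  let ?hs = "K_cols H U f l"
  have "norm1_on (U (Suc h)) (M_seq U m f (Suc l) \<tau> y)
      = norm1_on (U (Suc h)) (\<lambda>u. \<Sum>j<length ?hs. core_coords l y j *
          (obs_prob_after f (?hs ! j) \<tau> * test_prob f (?hs ! j @ \<tau>) u))"
    using M_seq_core_expansion[OF assms] by (intro norm1_on_cong) simp
  also have "\<dots> \<le> (\<Sum>j<length ?hs. norm1_on (U (Suc h)) (\<lambda>u. core_coords l y j *
          (obs_prob_after f (?hs ! j) \<tau> * test_prob f (?hs ! j @ \<tau>) u)))"
    by (rule norm1_on_sum)
  also have "\<dots> = (\<Sum>j<length ?hs. \<bar>core_coords l y j\<bar> *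
          (obs_prob_after f (?hs ! j) \<tau> * norm1_on (U (Suc h)) (test_prob f (?hs ! j @ \<tau>))))"
  proof (rule sum.cong[OF refl])
    fix j assume "j \<in> {..<length ?hs}"
    then have "?hs ! j \<in> set ?hs" by simp
    moreover have "set ?hs \<subseteq> hists l" using K_cols_subset_hists assms by simp
    ultimately have "?hs ! j \<in> hists l" by blast
    then have "obs_prob_after f (?hs ! j) \<tau> \<ge> 0"
      using obs_prob_after_nonneg[OF valid] \<tau> assms by (simp add: hists_def)
    then show "norm1_on (U (Suc h))
          (\<lambda>u. core_coords l y j * (obs_prob_after f (?hs ! j) \<tau> * test_prob f (?hs ! j @ \<tau>) u))
        = \<bar>core_coords l y j\<bar> *
          (obs_prob_after f (?hs ! j) \<tau> * norm1_on (U (Suc h)) (test_prob f (?hs ! j @ \<tau>)))"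
      by (simp add: norm1_on_cmult abs_mult)
  qed
  finally show ?thesis .
qed

lemma expected_norm1_M_seq_le_core_coords:
  assumes pol: "valid_policy H \<pi>" and "l < h" "h < H" and \<tau>0: "\<tau>0 \<in> hists l"
  shows "(\<Sum>\<tau>\<in>hists (h - l). pol_prob_after \<pi> \<tau>0 \<tau> * norm1_on (U (Suc h)) (M_seq U m f (Suc l) \<tau> y))
    \<le> (\<Sum>j<length (K_cols H U f l). \<bar>core_coords l y j\<bar>) * card (test_actions ` U (Suc h))"
proof -
  let ?hs = "K_cols H U f l"
  let ?N = "real (card (test_actions ` U (Suc h)))"
  let ?mass = "\<lambda>j. \<Sum>\<tau>\<in>hists (h - l). pol_prob_after \<pi> \<tau>0 \<tau> *
      (obs_prob_after f (?hs ! j) \<tau> * norm1_on (U (Suc h)) (test_prob f (?hs ! j @ \<tau>)))"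
  have "(\<Sum>\<tau>\<in>hists (h - l). pol_prob_after \<pi> \<tau>0 \<tau> * norm1_on (U (Suc h)) (M_seq U m f (Suc l) \<tau> y))
      \<le> (\<Sum>\<tau>\<in>hists (h - l). pol_prob_after \<pi> \<tau>0 \<tau> * (\<Sum>j<length ?hs. \<bar>core_coords l y j\<bar> *
          (obs_prob_after f (?hs ! j) \<tau> * norm1_on (U (Suc h)) (test_prob f (?hs ! j @ \<tau>)))))"
  proof (rule sum_mono, rule mult_left_mono)
    fix \<tau> :: "('ob,'a) hist" assume "\<tau> \<in> hists (h - l)"
    then show "norm1_on (U (Suc h)) (M_seq U m f (Suc l) \<tau> y)
        \<le> (\<Sum>j<length ?hs. \<bar>core_coords l y j\<bar> *
        (obs_prob_after f (?hs ! j) \<tau> * norm1_on (U (Suc h)) (test_prob f (?hs ! j @ \<tau>))))"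
      using norm1_M_seq_le_core_expansion \<open>l < h\<close> \<open>h < H\<close> by blast
    show "pol_prob_after \<pi> \<tau>0 \<tau> \<ge> 0"
      using pol_prob_after_nonneg[OF pol] \<open>\<tau> \<in> hists (h - l)\<close> \<tau>0 \<open>l < h\<close> \<open>h < H\<close>
      by (simp add: hists_def)
  qed
  also have "\<dots> = (\<Sum>j<length ?hs. \<bar>core_coords l y j\<bar> * ?mass j)"
    by (simp add: sum_distrib_left mult_ac sum.swap[where A = "hists (h - l)"])
  also have "\<dots> \<le> (\<Sum>j<length ?hs. \<bar>core_coords l y j\<bar> * ?N)"
  proof (rule sum_mono, rule mult_left_mono)
    fix j assume "j \<in> {..<length ?hs}"
    then have "?hs ! j \<in> set ?hs" by simp
    moreover have "set ?hs \<subseteq> hists l" using K_cols_subset_hists \<open>l < h\<close> \<open>h < H\<close> by simp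
    ultimately have "length (?hs ! j) = l" by (auto simp: hists_def)
    then show "?mass j \<le> ?N"
      using expected_norm1_test_prob_le_card_actions[OF pol valid, where \<rho> = \<tau>0 and \<sigma> = "?hs ! j"
          and n = "h - l" and U' = "U (Suc h)"] \<tau>0 \<open>l < h\<close> \<open>h < H\<close> finite_U U_subset_tests_at
      by (simp add: hists_def)
  qed simp
  also have "\<dots> = (\<Sum>j<length ?hs. \<bar>core_coords l y j\<bar>) * ?N"
    by (simp add: sum_distrib_right)
  finally show ?thesis .
qed

lemma expected_norm1_M_seq_le:
  assumes pol: "valid_policy H \<pi>" and "l \<le> h" "h < H" and \<tau>0: "\<tau>0 \<in> hists l"
  shows "(\<Sum>\<tau>\<in>hists (h - l). pol_prob_after \<pi> \<tau>0 \<tau> * norm1_on (U (Suc h)) (M_seq U m f (Suc l) \<tau> y))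
    \<le> real (UA_card H U) / \<alpha> * norm1_on (U (Suc l)) y"
proof (cases "l = h")
  case True
  have "1 * norm1_on (U (Suc l)) y \<le> real (UA_card H U) / \<alpha> * norm1_on (U (Suc l)) y"
    using one_le_UA_card_div_alpha \<open>h < H\<close> norm1_on_nonneg by (intro mult_right_mono) simp_all
  then show ?thesis using True by simp
next
  case False
  then have "l < h" using \<open>l \<le> h\<close> by simp
  have "(\<Sum>j<length (K_cols H U f l). \<bar>core_coords l y j\<bar>) * real (card (test_actions ` U (Suc h)))
      \<le> norm1_on (U (Suc l)) y / \<alpha> * real (UA_card H U)"
  proof (rule mult_mono)
    show "(\<Sum>j<length (K_cols H U f l). \<bar>core_coords l y j\<bar>) \<le> norm1_on (U (Suc l)) y / \<alpha>"
      using sum_abs_core_coords_le \<open>l < h\<close> \<open>h < H\<close> by simp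
    show "real (card (test_actions ` U (Suc h))) \<le> real (UA_card H U)"
      using card_actions_le_UA_card[of "Suc h" H U] \<open>h < H\<close> by simp
    show "0 \<le> norm1_on (U (Suc l)) y / \<alpha>"
      by (intro divide_nonneg_pos norm1_on_nonneg alpha_pos)
  qed simp
  with expected_norm1_M_seq_le_core_coords[OF pol \<open>l < h\<close> \<open>h < H\<close> \<tau>0, of y]
  show ?thesis by (simp add: mult.commute)
qed

lemma expected_norm1_M_seq_suffix_le:
  fixes R :: "('ob,'a) hist \<Rightarrow> ('ob,'a) test \<Rightarrow> real"
  assumes pol: "valid_policy H \<pi>" and "l \<le> h" "h < H"
  shows "(\<Sum>\<tau>\<in>hists h.
      norm1_on (U (Suc h)) (M_seq U m f (Suc l) (drop l \<tau>) (R (take l \<tau>))) * pol_prob \<pi> \<tau>)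
    \<le> real (UA_card H U) / \<alpha> * (\<Sum>\<tau>0\<in>hists l. norm1_on (U (Suc l)) (R \<tau>0) * pol_prob \<pi> \<tau>0)"
proof -
  let ?C = "real (UA_card H U) / \<alpha>"
  let ?F = "\<lambda>\<tau>. norm1_on (U (Suc h)) (M_seq U m f (Suc l) (drop l \<tau>) (R (take l \<tau>))) * pol_prob \<pi> \<tau>"
  have "(\<Sum>\<tau>\<in>hists h. ?F \<tau>) = (\<Sum>\<tau>0\<in>hists l. \<Sum>\<tau>\<in>hists (h - l). ?F (\<tau>0 @ \<tau>))"
    using sum_hists_add[where l = l and n = "h - l" and g = ?F] \<open>l \<le> h\<close> by simp
  also have "\<dots> = (\<Sum>\<tau>0\<in>hists l. pol_prob \<pi> \<tau>0 * (\<Sum>\<tau>\<in>hists (h - l).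
          pol_prob_after \<pi> \<tau>0 \<tau> * norm1_on (U (Suc h)) (M_seq U m f (Suc l) \<tau> (R \<tau>0))))"
    by (intro sum.cong refl) (simp add: hists_def pol_prob_append sum_distrib_left mult_ac)
  also have "\<dots> \<le> (\<Sum>\<tau>0\<in>hists l. pol_prob \<pi> \<tau>0 * (?C * norm1_on (U (Suc l)) (R \<tau>0)))"
  proof (rule sum_mono, rule mult_left_mono)
    fix \<tau>0 :: "('ob,'a) hist" assume "\<tau>0 \<in> hists l"
    then show "(\<Sum>\<tau>\<in>hists (h - l).
        pol_prob_after \<pi> \<tau>0 \<tau> * norm1_on (U (Suc h)) (M_seq U m f (Suc l) \<tau> (R \<tau>0)))
        \<le> ?C * norm1_on (U (Suc l)) (R \<tau>0)"
      using expected_norm1_M_seq_le[OF pol \<open>l \<le> h\<close> \<open>h < H\<close>] by blast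
    show "pol_prob \<pi> \<tau>0 \<ge> 0"
      using pol_prob_nonneg[OF pol] \<open>\<tau>0 \<in> hists l\<close> assms by (simp add: hists_def)
  qed
  also have "\<dots> = ?C * (\<Sum>\<tau>0\<in>hists l. norm1_on (U (Suc l)) (R \<tau>0) * pol_prob \<pi> \<tau>0)"
    by (simp add: sum_distrib_left mult_ac)
  finally show ?thesis .
qed

lemma expected_norm1_telescope_le:
  assumes pol: "valid_policy H \<pi>" and "h < H"
    and D: "\<And>\<tau> u. \<tau> \<in> hists h \<Longrightarrow> D \<tau> u = M_seq U m f 1 \<tau> y0 u +
      (\<Sum>i<h. M_seq U m f (Suc (Suc i)) (drop (Suc i) \<tau>) (R (Suc i) (take (Suc i) \<tau>)) u)"
  shows "(\<Sum>\<tau>\<in>hists h. norm1_on (U (Suc h)) (D \<tau>) * pol_prob \<pi> \<tau>)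
    \<le> real (UA_card H U) / \<alpha> *
      ((\<Sum>l=1..h. \<Sum>\<tau>\<in>hists l. norm1_on (U (Suc l)) (R l \<tau>) * pol_prob \<pi> \<tau>) + norm1_on (U 1) y0)"
proof -
  let ?C = "real (UA_card H U) / \<alpha>"
  let ?E = "\<lambda>l R'. \<Sum>\<tau>\<in>hists h.
    norm1_on (U (Suc h)) (M_seq U m f (Suc l) (drop l \<tau>) (R' (take l \<tau>))) * pol_prob \<pi> \<tau>"
  have "(\<Sum>\<tau>\<in>hists h. norm1_on (U (Suc h)) (D \<tau>) * pol_prob \<pi> \<tau>)
      \<le> ?E 0 (\<lambda>_. y0) + (\<Sum>i<h. ?E (Suc i) (R (Suc i)))"
  proof -
    have "D \<tau> = (\<lambda>u. M_seq U m f 1 \<tau> y0 u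
        + (\<Sum>i<h. M_seq U m f (Suc (Suc i)) (drop (Suc i) \<tau>) (R (Suc i) (take (Suc i) \<tau>)) u))"
      if "\<tau> \<in> hists h" for \<tau>
      using D[OF that] by (rule ext)
    then have "norm1_on (U (Suc h)) (D \<tau>) \<le> norm1_on (U (Suc h)) (M_seq U m f 1 \<tau> y0)
        + (\<Sum>i<h. norm1_on (U (Suc h))
            (M_seq U m f (Suc (Suc i)) (drop (Suc i) \<tau>) (R (Suc i) (take (Suc i) \<tau>))))"
      if "\<tau> \<in> hists h" for \<tau>
      using that by (simp add: norm1_on_add_sum)
    then have "(\<Sum>\<tau>\<in>hists h. norm1_on (U (Suc h)) (D \<tau>) * pol_prob \<pi> \<tau>)
      \<le> (\<Sum>\<tau>\<in>hists h. (norm1_on (U (Suc h)) (M_seq U m f 1 \<tau> y0)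
        + (\<Sum>i<h. norm1_on (U (Suc h))
            (M_seq U m f (Suc (Suc i)) (drop (Suc i) \<tau>) (R (Suc i) (take (Suc i) \<tau>)))))
        * pol_prob \<pi> \<tau>)"
      using pol_prob_nonneg[OF pol] \<open>h < H\<close>
      by (intro sum_mono mult_right_mono) (auto simp: hists_def)
    then show ?thesis
      by (simp add: distrib_right sum.distrib sum_distrib_right sum.swap[where B = "{..<h}"])
  qed
  also have "\<dots> \<le> ?C * norm1_on (U 1) y0 + (\<Sum>i<h. ?C *
      (\<Sum>\<tau>\<in>hists (Suc i). norm1_on (U (Suc (Suc i))) (R (Suc i) \<tau>) * pol_prob \<pi> \<tau>))"
  proof (intro add_mono sum_mono)
    show "?E 0 (\<lambda>_. y0) \<le> ?C * norm1_on (U 1) y0"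
      using expected_norm1_M_seq_suffix_le[OF pol _ \<open>h < H\<close>, of 0 "\<lambda>_. y0"] by simp
    show "?E (Suc i) (R (Suc i))
        \<le> ?C * (\<Sum>\<tau>\<in>hists (Suc i). norm1_on (U (Suc (Suc i))) (R (Suc i) \<tau>) * pol_prob \<pi> \<tau>)"
      if "i \<in> {..<h}" for i
      using expected_norm1_M_seq_suffix_le[OF pol _ \<open>h < H\<close>, of "Suc i" "R (Suc i)"] that by simp
  qed
  also have "\<dots> = ?C *
      ((\<Sum>l=1..h. \<Sum>\<tau>\<in>hists l. norm1_on (U (Suc l)) (R l \<tau>) * pol_prob \<pi> \<tau>) + norm1_on (U 1) y0)"
    by (simp add: distrib_left sum_distrib_left sum.atLeast1_atMost_eq)
  finally show ?thesis .
qed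

end

theorem lemma8:
  fixes H :: nat and \<alpha> :: real
    and \<F> :: "('ob::finite,'a::finite) model set"
    and U :: "nat \<Rightarrow> ('ob,'a) test set"
    and m :: "('ob,'a) model \<Rightarrow> nat \<Rightarrow> ('ob,'a) test \<Rightarrow> ('ob,'a) test \<Rightarrow> real"
    and fstar fk :: "('ob,'a) model"
    and \<pi> :: "('ob,'a) policy"
    and h :: nat
  assumes alpha_pos: "\<alpha> > 0"
    and fstar_in: "fstar \<in> \<F>"
    and fk_in: "fk \<in> \<F>"
    and valid: "\<And>f. f \<in> \<F> \<Longrightarrow> valid_model H f"
    and core: "\<And>f l. f \<in> \<F> \<Longrightarrow> l \<in> {1..H} \<Longrightarrow> is_core_test_set H f (U l) l"
    and Kdag: "\<And>f l. f \<in> \<F> \<Longrightarrow> l < H \<Longrightarrow> Kdag_norm U f l (K_cols H U f l) \<le> 1 / \<alpha>"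
    and obs_in_UH: "\<And>ob. ([], ob) \<in> U H"
    and m_repr: "\<And>f l ob a u \<tau>. f \<in> \<F> \<Longrightarrow> l \<in> {1..<H} \<Longrightarrow> u \<in> U (Suc l) \<Longrightarrow> \<tau> \<in> hists (l - 1) \<Longrightarrow>
        test_prob f \<tau> (ext_test ob a u) = inner_on (U l) (m f l (ext_test ob a u)) (test_prob f \<tau>)"
    and m_colspace: "\<And>f l ob a u. f \<in> \<F> \<Longrightarrow> l \<in> {1..<H} \<Longrightarrow> u \<in> U (Suc l) \<Longrightarrow>
        in_colspace_K H U f (l - 1) (m f l (ext_test ob a u))"
    and pol: "valid_policy H \<pi>"
    and h_range: "h \<in> {1..H - 1}"
  shows "(\<Sum>\<tau>\<in>hists h. norm1_on (U (Suc h))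
            (\<lambda>u. M_seq U m fk 1 \<tau> (q0 fk) u - M_seq U m fstar 1 \<tau> (q0 fstar) u) * pol_prob \<pi> \<tau>)
         \<le> real (UA_card H U) / \<alpha> *
           ((\<Sum>l=1..h. \<Sum>\<tau>\<in>hists l.
               norm1_on (U (Suc l))
                 (\<lambda>u. M_app U m fk l (fst (last \<tau>)) (snd (last \<tau>)) (M_seq U m fstar 1 (butlast \<tau>) (q0 fstar)) u
                    - M_app U m fstar l (fst (last \<tau>)) (snd (last \<tau>)) (M_seq U m fstar 1 (butlast \<tau>) (q0 fstar)) u)
               * pol_prob \<pi> \<tau>)
            + norm1_on (U 1) (\<lambda>u. q0 fk u - q0 fstar u))"
proof -
  interpret well_conditioned_psr H U fk m \<alpha>
    using alpha_pos fk_in valid core Kdag m_repr m_colspace by unfold_locales auto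
  have "h < H" using h_range by auto
  show ?thesis
    using M_seq_telescope[where g = fk and f = fstar and s = 1 and x = "q0 fk" and y = "q0 fstar"]
    by (intro expected_norm1_telescope_le[OF pol \<open>h < H\<close>]) (simp add: hists_def take_Suc_conv_app_nth)
qed

end
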